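(* Consider the IMAB model with $K\ge 2$ arms and finite alphabets $\mathcal{X}_1,\ldots,\mathcal{X}_K$, and run the generic UCB algorithm with the plug-in estimator $\hat H(\boldsymbol Y,n)=H(\hat p(\boldsymbol Y,n))$, the upper confidence deviation $\mathrm{UCD}(\boldsymbol Y,\delta,n)=\log\bigl(1+\frac{|\mathcal{X}_i|-1}{n}\bigr)+\sqrt{\frac{2\log^2(n)}{n}\log(\frac{2}{\delta})}$ for arm $i$, and $\delta_\alpha(t)=t^{-\alpha}$ with $\alpha>2$. Let $\beta\in(0,1)$. Then for every $t\ge1$, \[ R(t)\leq \sum_{i\in[K]:\Delta_i>0}\Bigl[\Gamma_{\mathrm{bias}}(\alpha,\beta,\mathcal{X}_i,\Delta_i,t)\,\Delta_i+\frac{2(\alpha-1)}{\alpha-2}\Delta_i\Bigr], \] where $\Gamma_{\mathrm{bias}}(\alpha,\beta,\mathcal{Y},\Delta,t):=\max\bigl\{\frac{|\mathcal{Y}|-1}{e^{\beta\Delta/2}-1},\,15\Lambda_2\bigl(\frac{8\log(2t^\alpha)}{(1-\beta)^2\Delta^2}\bigr)\bigr\}$.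
   Context: IMAB model: there are $K\ge2$ arms; arm $i$ emits i.i.d. symbols from an unknown PMF $p_i$ on a finite alphabet $\mathcal{X}_i$, independently across rounds and arms. $H_i:=H(p_i)=-\sum_x p_i(x)\log p_i(x)$ (natural log), $i^*\in\arg\max_i H_i$, $\Delta_i:=H_{i^*}-H_i$. Generic UCB algorithm: given an estimator $\hat H(\boldsymbol Y,n)$, an upper confidence deviation $\mathrm{UCD}(\boldsymbol Y,\delta,n)$ and a confidence function $\delta_\alpha(t)$, at each round $t=1,2,\ldots$ the player plays $I(t)\in\arg\max_{i\in[K]}\{\hat H(\boldsymbol X_i(t-1),N_i(t-1))+\mathrm{UCD}(\boldsymbol X_i(t-1),\delta_\alpha(t),N_i(t-1))\}$ (ties broken arbitrarily; an arm whose index is undefined, e.g. with $N_i(t-1)=0$, is treated as having index $+\infty$), where $\boldsymbol X_i(t-1)$ is the tuple of symbols observed from arm $i$ before round $t$ and $N_i(t-1)$ its length; it then observes a fresh symbol from $p_{I(t)}$, appended to $\boldsymbol X_{I(t)}$. $N_i(t)$ is the number of plays of arm $i$ in rounds $1,\ldots,t$. Pseudo-regret: $R(t):=\sum_{i:\Delta_i>0}\mathbb{E}[N_i(t)]\Delta_i$. Plug-in estimator: $\hat p(\boldsymbol Y,n)(y)=\frac1n\sum_{\ell=1}^n\mathbb{1}\{Y_\ell=y\}$ and $\hat H=H(\hat p)$. $\Lambda_k(s):=s\log^k s$. *)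

theory Defs
  imports "HOL-Probability.Probability"
begin

definition shannon_H :: "('a \<Rightarrow> real) \<Rightarrow> 'a set \<Rightarrow> real" where
  "shannon_H f S = - (\<Sum>x\<in>S. f x * ln (f x))"

definition pmf_entropy :: "'a pmf \<Rightarrow> real" where
  "pmf_entropy p = shannon_H (pmf p) (set_pmf p)"

definition emp_pmf :: "'a list \<Rightarrow> 'a \<Rightarrow> real" where
  "emp_pmf Y y = real (count_list Y y) / real (length Y)"

definition plugin_H :: "'a list \<Rightarrow> real" where
  "plugin_H Y = shannon_H (emp_pmf Y) (set Y)"

definition ucd :: "nat \<Rightarrow> 'a list \<Rightarrow> real \<Rightarrow> real" where
  "ucd m Y \<delta> = (let n = real (length Y) in
     ln (1 + (real m - 1) / n) + sqrt (2 * (ln n)\<^sup>2 / n * ln (2 / \<delta>)))"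

definition delta_conf :: "real \<Rightarrow> nat \<Rightarrow> real" where
  "delta_conf \<alpha> t = real t powr (- \<alpha>)"

text \<open>History: list of (arm, observed symbol) pairs in order of play.
  Observations of arm i extracted from a history.\<close>
definition obs :: "(nat \<times> 'a) list \<Rightarrow> nat \<Rightarrow> 'a list" where
  "obs h i = map snd (filter (\<lambda>(j, _). j = i) h)"

definition ucb_index :: "(nat \<Rightarrow> 'a set) \<Rightarrow> real \<Rightarrow> nat \<Rightarrow> (nat \<times> 'a) list \<Rightarrow> nat \<Rightarrow> ereal" where
  "ucb_index X \<alpha> t h i = (if obs h i = [] then \<infinity>
     else ereal (plugin_H (obs h i) + ucd (card (X i)) (obs h i) (delta_conf \<alpha> t)))"

definition ucb_argmax :: "nat \<Rightarrow> (nat \<Rightarrow> 'a set) \<Rightarrow> real \<Rightarrow> nat \<Rightarrow> (nat \<times> 'a) list \<Rightarrow> nat set" where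
  "ucb_argmax K X \<alpha> t h = {i. i < K \<and> (\<forall>j<K. ucb_index X \<alpha> t h j \<le> ucb_index X \<alpha> t h i)}"

text \<open>Run of the algorithm with tie-breaking/choice rule ch (ch t h = arm played in round t
  given history h of rounds 1..t-1), on the reward table \<omega>: the k-th play (k from 0)
  of arm i reveals \<omega> (i, k).\<close>
fun run :: "(nat \<Rightarrow> (nat \<times> 'a) list \<Rightarrow> nat) \<Rightarrow> (nat \<times> nat \<Rightarrow> 'a) \<Rightarrow> nat \<Rightarrow> (nat \<times> 'a) list" where
  "run ch \<omega> 0 = []"
| "run ch \<omega> (Suc t) = (let h = run ch \<omega> t; a = ch (Suc t) h in h @ [(a, \<omega> (a, length (obs h a)))])"

definition plays :: "(nat \<Rightarrow> (nat \<times> 'a) list \<Rightarrow> nat) \<Rightarrow> (nat \<times> nat \<Rightarrow> 'a) \<Rightarrow> nat \<Rightarrow> nat \<Rightarrow> nat" where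
  "plays ch \<omega> t i = length (obs (run ch \<omega> t) i)"

definition imab_space :: "(nat \<Rightarrow> 'a pmf) \<Rightarrow> (nat \<times> nat \<Rightarrow> 'a) measure" where
  "imab_space p = PiM UNIV (\<lambda>(i, k). measure_pmf (p i))"

definition max_entropy :: "nat \<Rightarrow> (nat \<Rightarrow> 'a pmf) \<Rightarrow> real" where
  "max_entropy K p = Max ((\<lambda>i. pmf_entropy (p i)) ` {..<K})"

definition gap :: "nat \<Rightarrow> (nat \<Rightarrow> 'a pmf) \<Rightarrow> nat \<Rightarrow> real" where
  "gap K p i = max_entropy K p - pmf_entropy (p i)"

definition pseudo_regret :: "nat \<Rightarrow> (nat \<Rightarrow> 'a pmf) \<Rightarrow> (nat \<Rightarrow> (nat \<times> 'a) list \<Rightarrow> nat) \<Rightarrow> nat \<Rightarrow> real" where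
  "pseudo_regret K p ch t =
     (\<Sum>i\<in>{i. i < K \<and> gap K p i > 0}.
        (\<integral>\<omega>. real (plays ch \<omega> t i) \<partial>imab_space p) * gap K p i)"

definition Lambda :: "nat \<Rightarrow> real \<Rightarrow> real" where
  "Lambda k s = s * (ln s) ^ k"

definition Gamma_bias :: "real \<Rightarrow> real \<Rightarrow> 'a set \<Rightarrow> real \<Rightarrow> nat \<Rightarrow> real" where
  "Gamma_bias \<alpha> \<beta> Y \<Delta> t = max ((real (card Y) - 1) / (exp (\<beta> * \<Delta> / 2) - 1))
     (15 * Lambda 2 (8 * ln (2 * real t powr \<alpha>) / ((1 - \<beta>)\<^sup>2 * \<Delta>\<^sup>2)))"

end

theory Submission
  imports Defs
begin

text \<open>A play of a suboptimal arm \<open>i\<close> after \<open>u\<close> earlier plays means that in that round either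
  the index of an optimal arm \<open>i\<^sup>*\<close> was below \<open>H\<^sub>i\<^sub>*\<close>, or the index of arm \<open>i\<close>, computed from
  some \<open>s \<ge> u\<close> samples, was at least \<open>H\<^sub>i\<^sub>*\<close>. The plug-in estimator underestimates the entropy
  by at most \<open>ln (1 + (m - 1) / n)\<close> in expectation (Gibbs' inequality, and the bound of the
  Kullback-Leibler divergence by \<open>ln (1 + \<chi>\<^sup>2)\<close>), and one sample changes it by at most
  \<open>2 ln n / n\<close>; so by McDiarmid's inequality each of the two events has probability at most
  \<open>\<delta>(\<tau>) / 2\<close>, once \<open>u \<ge> \<Gamma>\<^sub>b\<^sub>i\<^sub>a\<^sub>s\<close> makes bias plus twice the deviation smaller than the gap.
  Summing over rounds \<open>\<tau>\<close> and sample sizes \<open>s < \<tau>\<close> leaves \<open>\<Sum>\<^sub>\<tau> (\<tau> - 1) \<tau>\<^sup>-\<^sup>\<alpha> \<le> 1 / (\<alpha> - 2)\<close>.\<close>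

section \<open>Independent samples\<close>

lemma replicate_pmf_Suc_map:
  "replicate_pmf (Suc n) p = bind_pmf p (\<lambda>x. map_pmf ((#) x) (replicate_pmf n p))"
  by (simp add: map_pmf_def)

lemma finite_set_replicate_pmf:
  "finite (set_pmf p) \<Longrightarrow> finite (set_pmf (replicate_pmf n p))"
  unfolding set_replicate_pmf lists_eq_set
  using finite_lists_length_eq[of "set_pmf p" n] by (simp add: conj_commute)

lemma expectation_replicate_pmf_Suc:
  fixes f :: "'a list \<Rightarrow> real"
  assumes "finite (set_pmf p)"
  shows "measure_pmf.expectation (replicate_pmf (Suc n) p) f =
         measure_pmf.expectation p (\<lambda>x. measure_pmf.expectation (replicate_pmf n p) (\<lambda>xs. f (x # xs)))"
proof -
  have "measure_pmf.expectation (replicate_pmf (Suc n) p) f =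
     (\<Sum>x\<in>set_pmf p. pmf p x *\<^sub>R measure_pmf.expectation (map_pmf ((#) x) (replicate_pmf n p)) f)"
    unfolding replicate_pmf_Suc_map
    by (rule pmf_expectation_bind) (auto simp: assms finite_set_replicate_pmf)
  also have "\<dots> = measure_pmf.expectation p (\<lambda>x. measure_pmf.expectation (replicate_pmf n p) (\<lambda>xs. f (x # xs)))"
    by (subst integral_measure_pmf[OF assms]) auto
  finally show ?thesis .
qed

lemma pmf_replicate_pmf:
  "pmf (replicate_pmf n p) xs = (if length xs = n then (\<Prod>x\<leftarrow>xs. pmf p x) else 0)"
proof (induction n arbitrary: xs)
  case 0
  then show ?case by (cases xs) auto
next
  case (Suc n)
  show ?case
  proof (cases xs)
    case Nil
    then show ?thesis by (simp add: pmf_eq_0_set_pmf set_replicate_pmf)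
  next
    case (Cons y ys)
    have cons: "pmf (map_pmf ((#) x) (replicate_pmf n p)) (y # ys) = indicator {y} x * pmf (replicate_pmf n p) ys" for x
      by (cases "x = y") (auto simp: pmf_map_inj' inj_on_def pmf_eq_0_set_pmf)
    have "pmf (replicate_pmf (Suc n) p) xs = (\<integral>x. pmf (map_pmf ((#) x) (replicate_pmf n p)) (y # ys) \<partial>measure_pmf p)"
      by (simp only: replicate_pmf_Suc_map pmf_bind Cons)
    also have "\<dots> = (\<integral>x. indicator {y} x * pmf (replicate_pmf n p) ys \<partial>measure_pmf p)"
      by (simp only: cons)
    also have "\<dots> = pmf p y * pmf (replicate_pmf n p) ys"
      by (simp add: measure_pmf_single)
    finally show ?thesis using Suc Cons by auto
  qed
qed

lemma expectation_mono_finite_pmf: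
  fixes f g :: "'a \<Rightarrow> real"
  assumes "finite (set_pmf q)" "\<And>x. x \<in> set_pmf q \<Longrightarrow> f x \<le> g x"
  shows "measure_pmf.expectation q f \<le> measure_pmf.expectation q g"
  by (rule integral_mono_AE) (auto simp: assms integrable_measure_pmf_finite AE_measure_pmf_iff)

lemma prob_mono_on_set_pmf:
  assumes "\<And>x. x \<in> set_pmf q \<Longrightarrow> x \<in> A \<Longrightarrow> x \<in> B"
  shows "measure_pmf.prob q A \<le> measure_pmf.prob q B"
  by (rule measure_pmf.finite_measure_mono_AE) (auto simp: AE_measure_pmf_iff assms)

lemma prob_eq_0_on_set_pmf:
  assumes "\<And>x. x \<in> set_pmf q \<Longrightarrow> x \<notin> A"
  shows "measure_pmf.prob q A = 0"
  using prob_mono_on_set_pmf[of q A "{}"] assms by (simp add: antisym)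

section \<open>McDiarmid's inequality\<close>

definition bounded_differences :: "nat \<Rightarrow> real \<Rightarrow> ('a list \<Rightarrow> real) \<Rightarrow> bool" where
  "bounded_differences n c f \<longleftrightarrow>
     (\<forall>xs i b. length xs = n \<longrightarrow> i < n \<longrightarrow> \<bar>f (xs[i := b]) - f xs\<bar> \<le> c)"

lemma bounded_differences_Cons:
  "bounded_differences (Suc n) c f \<Longrightarrow> bounded_differences n c (\<lambda>xs. f (x # xs))"
  unfolding bounded_differences_def
  by (metis Suc_less_eq length_Cons list_update_code(3))

lemma bounded_differences_head:
  assumes "bounded_differences (Suc n) c f" "length xs = n"
  shows "\<bar>f (y # xs) - f (x # xs)\<bar> \<le> c"
  using assms unfolding bounded_differences_def
  by (metis length_Cons list_update_code(2) zero_less_Suc)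

lemma bounded_differences_uminus:
  "bounded_differences n c f \<Longrightarrow> bounded_differences n c (\<lambda>xs. - f xs)"
  unfolding bounded_differences_def by (metis abs_minus_commute minus_diff_eq minus_diff_minus)

lemma hoeffdings_lemma_finite_pmf:
  fixes g :: "'a \<Rightarrow> real"
  assumes fin: "finite (set_pmf q)" and l: "l > 0"
    and range: "\<And>x y. x \<in> set_pmf q \<Longrightarrow> y \<in> set_pmf q \<Longrightarrow> \<bar>g x - g y\<bar> \<le> c"
  shows "measure_pmf.expectation q (\<lambda>x. exp (l * (g x - measure_pmf.expectation q g)))
           \<le> exp (l\<^sup>2 * c\<^sup>2 / 8)"
proof -
  define a where "a = Min (g ` set_pmf q)"
  define b where "b = Max (g ` set_pmf q)"
  have ne: "set_pmf q \<noteq> {}" by (rule set_pmf_not_empty)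
  have ab: "a \<le> g x" "g x \<le> b" if "x \<in> set_pmf q" for x
    using fin that by (auto simp: a_def b_def)
  have "a \<in> g ` set_pmf q" "b \<in> g ` set_pmf q"
    unfolding a_def b_def using fin ne by (intro Min_in Max_in; simp)+
  then obtain xa xb where "xa \<in> set_pmf q" "g xa = a" "xb \<in> set_pmf q" "g xb = b"
    by blast
  then have "0 \<le> b - a" "b - a \<le> c" using range[of xb xa] ab by auto
  then have width: "(b - a)\<^sup>2 \<le> c\<^sup>2" by (intro power_mono) auto
  interpret interval_bounded_random_variable "measure_pmf q" g a b
    by unfold_locales (auto simp: AE_measure_pmf_iff ab)
  have "ennreal (measure_pmf.expectation q (\<lambda>x. exp (l * (g x - measure_pmf.expectation q g))))
       = (\<integral>\<^sup>+x. exp (l * (g x - measure_pmf.expectation q g)) \<partial>measure_pmf q)"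
    by (rule nn_integral_eq_integral[symmetric]) (auto simp: fin integrable_measure_pmf_finite)
  also have "\<dots> \<le> ennreal (exp (l\<^sup>2 * (b - a)\<^sup>2 / 8))"
    by (rule Hoeffdings_lemma_nn_integral[OF l])
  finally have "measure_pmf.expectation q (\<lambda>x. exp (l * (g x - measure_pmf.expectation q g)))
      \<le> exp (l\<^sup>2 * (b - a)\<^sup>2 / 8)"
    by simp
  also have "\<dots> \<le> exp (l\<^sup>2 * c\<^sup>2 / 8)"
    using width by (intro exp_mono divide_right_mono mult_left_mono) auto
  finally show ?thesis .
qed

text \<open>The moment generating function bound is proved by conditioning on the first sample:
  averaging over the others, the conditional mean of \<open>f\<close> varies by at most \<open>c\<close> with
  the first sample, so Hoeffding's lemma controls that step and the induction hypothesis the rest.\<close>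

lemma mcdiarmid_mgf_bound:
  fixes f :: "'a list \<Rightarrow> real"
  assumes fin: "finite (set_pmf p)" and l: "l > 0" and bd: "bounded_differences n c f"
  shows "measure_pmf.expectation (replicate_pmf n p)
           (\<lambda>xs. exp (l * (f xs - measure_pmf.expectation (replicate_pmf n p) f)))
         \<le> exp (l\<^sup>2 * n * c\<^sup>2 / 8)"
  using bd
proof (induction n arbitrary: f)
  case 0
  then show ?case by simp
next
  case (Suc n)
  define g where "g x = measure_pmf.expectation (replicate_pmf n p) (\<lambda>xs. f (x # xs))" for x
  define Ef where "Ef = measure_pmf.expectation (replicate_pmf (Suc n) p) f"
  have Ef: "Ef = measure_pmf.expectation p g"
    unfolding Ef_def g_def by (rule expectation_replicate_pmf_Suc[OF fin])
  have fin': "finite (set_pmf (replicate_pmf n p))" by (rule finite_set_replicate_pmf[OF fin])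
  have cond: "measure_pmf.expectation (replicate_pmf n p) (\<lambda>xs. exp (l * (f (x # xs) - Ef)))
     \<le> exp (l * (g x - Ef)) * exp (l\<^sup>2 * n * c\<^sup>2 / 8)" for x
  proof -
    have "measure_pmf.expectation (replicate_pmf n p) (\<lambda>xs. exp (l * (f (x # xs) - Ef)))
       = measure_pmf.expectation (replicate_pmf n p) (\<lambda>xs. exp (l * (g x - Ef)) * exp (l * (f (x # xs) - g x)))"
      by (simp add: algebra_simps flip: exp_add)
    also have "\<dots> = exp (l * (g x - Ef)) * measure_pmf.expectation (replicate_pmf n p) (\<lambda>xs. exp (l * (f (x # xs) - g x)))"
      by simp
    also have "\<dots> \<le> exp (l * (g x - Ef)) * exp (l\<^sup>2 * n * c\<^sup>2 / 8)"
      using Suc.IH[OF bounded_differences_Cons[OF Suc.prems]] by (simp add: g_def)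
    finally show ?thesis .
  qed
  have g_range: "\<bar>g x - g y\<bar> \<le> c" for x y
  proof -
    have diff: "\<bar>f (x # xs) - f (y # xs)\<bar> \<le> c" if "xs \<in> set_pmf (replicate_pmf n p)" for xs
      using bounded_differences_head[OF Suc.prems, of xs x y] that
      by (simp add: set_replicate_pmf abs_minus_commute)
    have "g x - g y = measure_pmf.expectation (replicate_pmf n p) (\<lambda>xs. f (x # xs) - f (y # xs))"
      unfolding g_def by (simp add: fin' integrable_measure_pmf_finite)
    moreover have "\<dots> \<le> measure_pmf.expectation (replicate_pmf n p) (\<lambda>_. c)"
      using diff by (intro expectation_mono_finite_pmf[OF fin']) (auto simp: abs_le_iff)
    moreover have "measure_pmf.expectation (replicate_pmf n p) (\<lambda>_. - c)
        \<le> measure_pmf.expectation (replicate_pmf n p) (\<lambda>xs. f (x # xs) - f (y # xs))"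
      using diff by (intro expectation_mono_finite_pmf[OF fin']) (force simp: abs_le_iff)
    ultimately show ?thesis by (simp add: abs_le_iff)
  qed
  have "measure_pmf.expectation (replicate_pmf (Suc n) p) (\<lambda>xs. exp (l * (f xs - Ef)))
      = measure_pmf.expectation p (\<lambda>x. measure_pmf.expectation (replicate_pmf n p) (\<lambda>xs. exp (l * (f (x # xs) - Ef))))"
    by (rule expectation_replicate_pmf_Suc[OF fin])
  also have "\<dots> \<le> measure_pmf.expectation p (\<lambda>x. exp (l * (g x - Ef)) * exp (l\<^sup>2 * n * c\<^sup>2 / 8))"
    by (rule expectation_mono_finite_pmf[OF fin cond])
  also have "\<dots> = measure_pmf.expectation p (\<lambda>x. exp (l * (g x - Ef))) * exp (l\<^sup>2 * n * c\<^sup>2 / 8)"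
    by simp
  also have "\<dots> \<le> exp (l\<^sup>2 * c\<^sup>2 / 8) * exp (l\<^sup>2 * n * c\<^sup>2 / 8)"
    unfolding Ef using hoeffdings_lemma_finite_pmf[OF fin l g_range] by (intro mult_right_mono) auto
  also have "\<dots> = exp (l\<^sup>2 * real (Suc n) * c\<^sup>2 / 8)"
    by (simp add: algebra_simps add_divide_distrib flip: exp_add)
  finally show ?case unfolding Ef_def .
qed

lemma mcdiarmid_inequality:
  fixes f :: "'a list \<Rightarrow> real"
  assumes fin: "finite (set_pmf p)" and bd: "bounded_differences n c f"
    and pos: "c > 0" "n > 0" "\<epsilon> > 0"
  shows "measure_pmf.prob (replicate_pmf n p)
           {xs. f xs - measure_pmf.expectation (replicate_pmf n p) f \<ge> \<epsilon>}
         \<le> exp (- 2 * \<epsilon>\<^sup>2 / (n * c\<^sup>2))"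
proof -
  define Ef where "Ef = measure_pmf.expectation (replicate_pmf n p) f"
  define l where "l = 4 * \<epsilon> / (n * c\<^sup>2)"
  have l: "l > 0" using pos by (simp add: l_def)
  have fin': "finite (set_pmf (replicate_pmf n p))" by (rule finite_set_replicate_pmf[OF fin])
  have markov: "indicator {xs. f xs - Ef \<ge> \<epsilon>} xs \<le> exp (- l * \<epsilon>) * exp (l * (f xs - Ef))" for xs
  proof (cases "f xs - Ef \<ge> \<epsilon>")
    case True
    then have "0 \<le> - l * \<epsilon> + l * (f xs - Ef)"
      using l by (simp add: mult_left_mono)
    then show ?thesis using True by (simp flip: exp_add)
  qed auto
  have "measure_pmf.prob (replicate_pmf n p) {xs. f xs - Ef \<ge> \<epsilon>}
      = measure_pmf.expectation (replicate_pmf n p) (indicator {xs. f xs - Ef \<ge> \<epsilon>})"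
    by simp
  also have "\<dots> \<le> measure_pmf.expectation (replicate_pmf n p) (\<lambda>xs. exp (- l * \<epsilon>) * exp (l * (f xs - Ef)))"
    by (rule expectation_mono_finite_pmf[OF fin' markov])
  also have "\<dots> = exp (- l * \<epsilon>) * measure_pmf.expectation (replicate_pmf n p) (\<lambda>xs. exp (l * (f xs - Ef)))"
    by simp
  also have "\<dots> \<le> exp (- l * \<epsilon>) * exp (l\<^sup>2 * n * c\<^sup>2 / 8)"
    using mcdiarmid_mgf_bound[OF fin l bd] unfolding Ef_def by (intro mult_left_mono) auto
  also have "\<dots> = exp (- 2 * \<epsilon>\<^sup>2 / (n * c\<^sup>2))"
    using pos by (simp add: l_def field_simps power2_eq_square flip: exp_add)
  finally show ?thesis unfolding Ef_def .
qed

section \<open>The plug-in entropy estimator\<close>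

definition xlnx :: "nat \<Rightarrow> real" where
  "xlnx k = real k * ln (real k)"

lemma plugin_H_eq_sum:
  assumes "finite U" "set xs \<subseteq> U"
  shows "plugin_H xs = - (\<Sum>y\<in>U. emp_pmf xs y * ln (emp_pmf xs y))"
  unfolding plugin_H_def shannon_H_def
  using assms by (intro arg_cong[where f = uminus] sum.mono_neutral_left)
    (auto simp: emp_pmf_def count_list_0_iff)

lemma plugin_H_eq_ln_length_minus_sum_xlnx:
  assumes "finite U" "set xs \<subseteq> U" "xs \<noteq> []"
  shows "plugin_H xs = ln (length xs) - (\<Sum>y\<in>U. xlnx (count_list xs y)) / length xs"
proof -
  define n where "n = real (length xs)"
  have n: "n > 0" using assms by (simp add: n_def)
  have summand: "emp_pmf xs y * ln (emp_pmf xs y)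
      = xlnx (count_list xs y) / n - real (count_list xs y) / n * ln n" for y
    using n by (cases "count_list xs y = 0")
      (simp_all add: emp_pmf_def xlnx_def ln_div n_def[symmetric] field_simps)
  have counts: "(\<Sum>y\<in>U. real (count_list xs y)) = n"
    using sum_count_set[OF assms(2,1)] unfolding n_def by (metis of_nat_sum)
  have "plugin_H xs = - ((\<Sum>y\<in>U. xlnx (count_list xs y)) / n - (\<Sum>y\<in>U. real (count_list xs y)) / n * ln n)"
    by (simp add: plugin_H_eq_sum[OF assms(1,2)] summand sum_subtractf sum_divide_distrib sum_distrib_right)
  also have "\<dots> = ln n - (\<Sum>y\<in>U. xlnx (count_list xs y)) / n"
    using n by (simp add: counts)
  finally show ?thesis by (simp add: n_def)
qed

lemma count_list_list_update:
  "i < length xs \<Longrightarrow> count_list (xs[i := b]) y =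
     count_list xs y - (if xs ! i = y then 1 else 0) + (if b = y then 1 else 0)"
proof (induction xs arbitrary: i)
  case Nil
  then show ?case by simp
next
  case (Cons x xs)
  show ?case
  proof (cases i)
    case (Suc j)
    then have "j < length xs" "count_list xs (xs ! j) \<noteq> 0"
      using Cons.prems by (auto simp: count_list_0_iff)
    then show ?thesis using Cons.IH Suc by auto
  qed auto
qed

lemma count_list_add_count_list_le_length:
  assumes "a \<noteq> b"
  shows "count_list xs a + count_list xs b \<le> length xs"
proof -
  have "sum (count_list xs) {a, b} \<le> sum (count_list xs) (insert a (insert b (set xs)))"
    by (intro sum_mono2) auto
  also have "\<dots> = length xs" by (intro sum_count_set) auto
  finally show ?thesis using assms by simp
qed

lemma xlnx_increment_nonneg: "1 \<le> k \<Longrightarrow> 0 \<le> xlnx k - xlnx (k - 1)"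
proof (cases "k = 1")
  case False
  assume "1 \<le> k"
  then have "real (k - 1) * ln (real (k - 1)) \<le> real k * ln (real k)"
    using False by (intro mult_mono) auto
  then show ?thesis by (simp add: xlnx_def)
qed (simp add: xlnx_def)

text \<open>The increment \<open>k ln k - (k - 1) ln (k - 1)\<close> lies between \<open>ln k\<close> and \<open>ln k + 1\<close>.\<close>

lemma xlnx_increment_le:
  assumes "1 \<le> k" "k \<le> n" "2 \<le> n"
  shows "xlnx k - xlnx (k - 1) \<le> 2 * ln (real n)"
proof -
  have lnk: "ln (real k) \<le> ln (real n)" using assms by simp
  consider "k \<le> 2" | "3 \<le> k" by linarith
  then show ?thesis
  proof cases
    case 1
    then have "k = 1 \<or> k = 2" using assms(1) by linarith
    then show ?thesis using assms lnk by (auto simp: xlnx_def)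
  next
    case 2
    have k1: "real (k - 1) > 0" using 2 by simp
    have "ln (real k) - ln (real (k - 1)) \<le> real k / real (k - 1) - 1"
      using k1 ln_le_minus_one[of "real k / real (k - 1)"] by (simp add: ln_div)
    also have "\<dots> = 1 / real (k - 1)" using 2 by (simp add: field_simps)
    finally have "real (k - 1) * (ln (real k) - ln (real (k - 1))) \<le> 1"
      using k1 by (simp add: field_simps)
    then have "xlnx k - xlnx (k - 1) \<le> ln (real k) + 1"
      using 2 by (simp add: xlnx_def algebra_simps)
    also have "\<dots> \<le> ln (real n) + ln 3" using lnk ln3_gt_1 by simp
    also have "ln (3::real) \<le> ln (real n)" using 2 assms(2) by simp
    finally show ?thesis by simp
  qed
qed

text \<open>Changing one sample moves one unit of count from a symbol \<open>a\<close> to a symbol \<open>b\<close>;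
  only the \<open>xlnx\<close>-terms of \<open>a\<close> and \<open>b\<close> change, each by an increment bounded above.\<close>

lemma bounded_differences_plugin_H:
  assumes n: "2 \<le> n"
  shows "bounded_differences n (2 * ln (real n) / real n) plugin_H"
  unfolding bounded_differences_def
proof (intro allI impI)
  fix xs :: "'a list" and i b
  assume len: "length xs = n" and i: "i < n"
  define a where "a = xs ! i"
  show "\<bar>plugin_H (xs[i := b]) - plugin_H xs\<bar> \<le> 2 * ln (real n) / real n"
  proof (cases "a = b")
    case True
    then have "xs[i := b] = xs" unfolding a_def by (metis list_update_id)
    then show ?thesis using n by simp
  next
    case False
    define U where "U = insert b (set xs)"
    have U: "finite U" "set xs \<subseteq> U" "set (xs[i := b]) \<subseteq> U"
      using set_update_subset_insert[of xs i b] by (auto simp: U_def)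
    have ab: "a \<in> U" "b \<in> U" using i len by (auto simp: U_def a_def)
    have cnt: "count_list (xs[i := b]) y =
        count_list xs y - (if a = y then 1 else 0) + (if b = y then 1 else 0)" for y
      using count_list_list_update[of i xs b y] i len by (simp add: a_def)
    define \<Delta> where "\<Delta> y = xlnx (count_list xs y) - xlnx (count_list (xs[i := b]) y)" for y
    define ka kb where "ka = count_list xs a" and "kb = count_list xs b + 1"
    have "(\<Sum>y\<in>U. \<Delta> y) = (\<Sum>y\<in>{a, b}. \<Delta> y)"
      using ab U by (intro sum.mono_neutral_right) (auto simp: \<Delta>_def cnt)
    also have "\<dots> = (xlnx ka - xlnx (ka - 1)) - (xlnx kb - xlnx (kb - 1))"
      using False by (simp add: \<Delta>_def cnt ka_def kb_def)
    finally have sum\<Delta>: "(\<Sum>y\<in>U. \<Delta> y) = (xlnx ka - xlnx (ka - 1)) - (xlnx kb - xlnx (kb - 1))" .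
    have "1 \<le> ka" using i len by (metis a_def count_list_0_iff ka_def less_one not_less nth_mem)
    moreover have "ka + kb \<le> n + 1"
      using count_list_add_count_list_le_length[OF False, of xs] len by (simp add: ka_def kb_def)
    ultimately have "\<bar>(xlnx ka - xlnx (ka - 1)) - (xlnx kb - xlnx (kb - 1))\<bar> \<le> 2 * ln (real n)"
      using n xlnx_increment_nonneg[of ka] xlnx_increment_nonneg[of kb]
        xlnx_increment_le[of ka n] xlnx_increment_le[of kb n] by (simp add: kb_def abs_le_iff)
    moreover have "plugin_H (xs[i := b]) - plugin_H xs = (\<Sum>y\<in>U. \<Delta> y) / real n"
    proof -
      have "xs \<noteq> []" "xs[i := b] \<noteq> []" using len i by auto
      then show ?thesis
        using plugin_H_eq_ln_length_minus_sum_xlnx[OF U(1) U(3)]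
          plugin_H_eq_ln_length_minus_sum_xlnx[OF U(1,2)] len
        by (simp add: \<Delta>_def sum_subtractf diff_divide_distrib)
    qed
    ultimately show ?thesis
      using n sum\<Delta> by (simp add: divide_right_mono)
  qed
qed

lemma real_count_list_Cons: "real (count_list (x # xs) y) = indicator {y} x + real (count_list xs y)"
  by (simp add: indicator_def)

lemma expectation_count_list:
  assumes fin: "finite (set_pmf p)"
  shows "measure_pmf.expectation (replicate_pmf n p) (\<lambda>xs. real (count_list xs y)) = n * pmf p y"
proof (induction n)
  case (Suc n)
  have fin': "finite (set_pmf (replicate_pmf n p))" by (rule finite_set_replicate_pmf[OF fin])
  have "measure_pmf.expectation (replicate_pmf (Suc n) p) (\<lambda>xs. real (count_list xs y))
      = measure_pmf.expectation p (\<lambda>x. indicator {y} x + n * pmf p y)"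
    by (subst expectation_replicate_pmf_Suc[OF fin], simp only: real_count_list_Cons)
      (simp add: Suc fin' integrable_measure_pmf_finite)
  also have "\<dots> = pmf p y + n * pmf p y"
    by (simp add: fin integrable_measure_pmf_finite measure_pmf_single)
  finally show ?case by (simp add: algebra_simps)
qed simp

lemma expectation_count_list_sq:
  assumes fin: "finite (set_pmf p)"
  shows "measure_pmf.expectation (replicate_pmf n p) (\<lambda>xs. (real (count_list xs y))\<^sup>2)
           = n * pmf p y * (1 - pmf p y) + (real n)\<^sup>2 * (pmf p y)\<^sup>2"
proof (induction n)
  case (Suc n)
  have fin': "finite (set_pmf (replicate_pmf n p))" by (rule finite_set_replicate_pmf[OF fin])
  have sq: "(real (count_list (x # xs) y))\<^sup>2
      = indicator {y} x * (1 + 2 * real (count_list xs y)) + (real (count_list xs y))\<^sup>2" for x xs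
    by (simp add: real_count_list_Cons indicator_def power2_eq_square algebra_simps)
  have "measure_pmf.expectation (replicate_pmf (Suc n) p) (\<lambda>xs. (real (count_list xs y))\<^sup>2)
      = measure_pmf.expectation p (\<lambda>x. indicator {y} x * (1 + 2 * (n * pmf p y))
          + (n * pmf p y * (1 - pmf p y) + (real n)\<^sup>2 * (pmf p y)\<^sup>2))"
    by (subst expectation_replicate_pmf_Suc[OF fin], simp only: sq)
      (simp add: Suc fin' integrable_measure_pmf_finite expectation_count_list[OF fin])
  also have "\<dots> = pmf p y * (1 + 2 * (n * pmf p y)) + (n * pmf p y * (1 - pmf p y) + (real n)\<^sup>2 * (pmf p y)\<^sup>2)"
    by (simp add: fin integrable_measure_pmf_finite measure_pmf_single)
  finally show ?case by (simp add: algebra_simps power2_eq_square)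
qed simp

lemma expectation_emp_pmf:
  assumes fin: "finite (set_pmf p)" and n: "n > 0"
  shows "measure_pmf.expectation (replicate_pmf n p) (\<lambda>xs. emp_pmf xs y) = pmf p y"
proof -
  have "measure_pmf.expectation (replicate_pmf n p) (\<lambda>xs. emp_pmf xs y)
      = measure_pmf.expectation (replicate_pmf n p) (\<lambda>xs. real (count_list xs y)) / n"
    by (subst integral_cong_AE[where g = "\<lambda>xs. real (count_list xs y) / n"])
      (auto simp: AE_measure_pmf_iff set_replicate_pmf emp_pmf_def)
  then show ?thesis using n by (simp add: expectation_count_list[OF fin])
qed

lemma expectation_emp_pmf_sq:
  assumes fin: "finite (set_pmf p)" and n: "n > 0"
  shows "measure_pmf.expectation (replicate_pmf n p) (\<lambda>xs. (emp_pmf xs y)\<^sup>2)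
         = (pmf p y)\<^sup>2 + pmf p y * (1 - pmf p y) / n"
proof -
  have "measure_pmf.expectation (replicate_pmf n p) (\<lambda>xs. (emp_pmf xs y)\<^sup>2)
      = measure_pmf.expectation (replicate_pmf n p) (\<lambda>xs. (real (count_list xs y))\<^sup>2) / (real n)\<^sup>2"
    by (subst integral_cong_AE[where g = "\<lambda>xs. (real (count_list xs y))\<^sup>2 / (real n)\<^sup>2"])
      (auto simp: AE_measure_pmf_iff set_replicate_pmf emp_pmf_def power_divide)
  also have "\<dots> = (pmf p y)\<^sup>2 + pmf p y * (1 - pmf p y) / n"
    using n by (simp only: expectation_count_list_sq[OF fin]) (simp add: field_simps power2_eq_square)
  finally show ?thesis .
qed

lemma sum_emp_pmf:
  assumes "finite U" "set xs \<subseteq> U" "xs \<noteq> []"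
  shows "(\<Sum>y\<in>U. emp_pmf xs y) = 1"
proof -
  have "(\<Sum>y\<in>U. real (count_list xs y)) = length xs"
    using sum_count_set[OF assms(2,1)] by (metis of_nat_sum)
  then show ?thesis using assms by (simp add: emp_pmf_def flip: sum_divide_distrib)
qed

lemma ln_le_tangent: "0 < x \<Longrightarrow> 0 < a \<Longrightarrow> ln x \<le> ln a + x / a - (1::real)"
  using ln_le_minus_one[of "x / a"] by (simp add: ln_div)

text \<open>Concavity of \<open>ln\<close> (Jensen's inequality) for a probability vector \<open>q\<close>; terms with
  \<open>q y = 0\<close> vanish because \<open>0 * ln (r y / 0) = 0\<close>.\<close>

lemma sum_mult_ln_div_le_ln_sum:
  fixes q r :: "'a \<Rightarrow> real"
  assumes A: "finite A" and q: "\<And>y. y \<in> A \<Longrightarrow> 0 \<le> q y" "sum q A = 1"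
    and r: "\<And>y. y \<in> A \<Longrightarrow> 0 \<le> r y" "\<And>y. y \<in> A \<Longrightarrow> 0 < q y \<Longrightarrow> 0 < r y"
  shows "(\<Sum>y\<in>A. q y * ln (r y / q y)) \<le> ln (sum r A)"
proof -
  define S where "S = sum r A"
  obtain y0 where "y0 \<in> A" "q y0 \<noteq> 0"
    using q(2) by (metis sum.neutral zero_neq_one)
  then have "0 < r y0" using q(1) r(2) by force
  then have S: "S > 0"
    unfolding S_def using A r(1) \<open>y0 \<in> A\<close> by (metis order_less_le_trans sum_nonneg_leq_bound order.refl)
  have summand: "q y * ln (r y / q y) \<le> q y * ln S + r y / S - q y" if "y \<in> A" for y
  proof (cases "q y = 0")
    case True
    then show ?thesis using S r(1)[OF that] by simp
  next
    case False
    then have "0 < q y" "0 < r y" using q(1) r(2) that by force+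
    then have "q y * ln (r y / q y) \<le> q y * (ln S + r y / q y / S - 1)"
      using S by (intro mult_left_mono ln_le_tangent) auto
    then show ?thesis using \<open>0 < q y\<close> by (simp add: algebra_simps)
  qed
  have "(\<Sum>y\<in>A. q y * ln (r y / q y)) \<le> (\<Sum>y\<in>A. q y * ln S + r y / S - q y)"
    by (rule sum_mono[OF summand])
  also have "\<dots> = ln S"
    using q(2) S by (simp add: sum.distrib sum_subtractf S_def flip: sum_distrib_right sum_divide_distrib)
  finally show ?thesis by (simp add: S_def)
qed

definition emp_cross_entropy :: "'a pmf \<Rightarrow> 'a list \<Rightarrow> real" where
  "emp_cross_entropy p xs = - (\<Sum>y\<in>set_pmf p. emp_pmf xs y * ln (pmf p y))"

text \<open>\<open>emp_sq_ratio p xs\<close> is \<open>1 + \<chi>\<^sup>2\<close> of the empirical distribution with respect to \<open>p\<close>,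
  i.e.\ the exponential of their Renyi divergence of order 2, which dominates their
  Kullback-Leibler divergence \<open>emp_cross_entropy p xs - plugin_H xs\<close>.\<close>

definition emp_sq_ratio :: "'a pmf \<Rightarrow> 'a list \<Rightarrow> real" where
  "emp_sq_ratio p xs = (\<Sum>y\<in>set_pmf p. (emp_pmf xs y)\<^sup>2 / pmf p y)"

lemma emp_pmf_nonneg: "0 \<le> emp_pmf xs y"
  by (simp add: emp_pmf_def)

lemma plugin_H_le_emp_cross_entropy:
  assumes fin: "finite (set_pmf p)" and xs: "set xs \<subseteq> set_pmf p" "xs \<noteq> []"
  shows "plugin_H xs \<le> emp_cross_entropy p xs"
proof -
  have "(\<Sum>y\<in>set_pmf p. emp_pmf xs y * ln (pmf p y / emp_pmf xs y)) \<le> ln (\<Sum>y\<in>set_pmf p. pmf p y)"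
    by (intro sum_mult_ln_div_le_ln_sum)
      (auto simp: fin emp_pmf_nonneg sum_emp_pmf[OF fin xs] pmf_positive)
  moreover have "emp_pmf xs y * ln (pmf p y / emp_pmf xs y)
      = emp_pmf xs y * ln (pmf p y) - emp_pmf xs y * ln (emp_pmf xs y)" if "y \<in> set_pmf p" for y
    using pmf_positive[OF that] emp_pmf_nonneg[of xs y]
    by (cases "emp_pmf xs y = 0") (simp_all add: ln_div algebra_simps)
  ultimately show ?thesis
    using sum_pmf_eq_1[OF fin order.refl]
    by (simp add: plugin_H_eq_sum[OF fin xs(1)] emp_cross_entropy_def sum_subtractf)
qed

lemma emp_cross_entropy_minus_ln_emp_sq_ratio_le_plugin_H:
  assumes fin: "finite (set_pmf p)" and xs: "set xs \<subseteq> set_pmf p" "xs \<noteq> []"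
  shows "emp_cross_entropy p xs - ln (emp_sq_ratio p xs) \<le> plugin_H xs"
proof -
  have "(\<Sum>y\<in>set_pmf p. emp_pmf xs y * ln ((emp_pmf xs y)\<^sup>2 / pmf p y / emp_pmf xs y))
      \<le> ln (emp_sq_ratio p xs)"
    unfolding emp_sq_ratio_def
    by (intro sum_mult_ln_div_le_ln_sum)
      (auto simp: fin emp_pmf_nonneg sum_emp_pmf[OF fin xs] pmf_positive)
  moreover have "emp_pmf xs y * ln ((emp_pmf xs y)\<^sup>2 / pmf p y / emp_pmf xs y)
      = emp_pmf xs y * ln (emp_pmf xs y) - emp_pmf xs y * ln (pmf p y)" if "y \<in> set_pmf p" for y
    using pmf_positive[OF that] emp_pmf_nonneg[of xs y]
    by (cases "emp_pmf xs y = 0") (simp_all add: ln_div power2_eq_square algebra_simps)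
  ultimately show ?thesis
    by (simp add: plugin_H_eq_sum[OF fin xs(1)] emp_cross_entropy_def sum_subtractf)
qed

lemma expectation_emp_cross_entropy:
  assumes fin: "finite (set_pmf p)" and n: "n > 0"
  shows "measure_pmf.expectation (replicate_pmf n p) (emp_cross_entropy p) = pmf_entropy p"
  using finite_set_replicate_pmf[OF fin]
  by (simp add: emp_cross_entropy_def[abs_def] Bochner_Integration.integral_sum
      integrable_measure_pmf_finite expectation_emp_pmf[OF fin n] pmf_entropy_def shannon_H_def)

lemma expectation_emp_sq_ratio:
  assumes fin: "finite (set_pmf p)" and n: "n > 0"
  shows "measure_pmf.expectation (replicate_pmf n p) (emp_sq_ratio p)
         = 1 + (real (card (set_pmf p)) - 1) / n"
proof -
  have "measure_pmf.expectation (replicate_pmf n p) (emp_sq_ratio p)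
      = (\<Sum>y\<in>set_pmf p. ((pmf p y)\<^sup>2 + pmf p y * (1 - pmf p y) / n) / pmf p y)"
    using finite_set_replicate_pmf[OF fin]
    by (simp add: emp_sq_ratio_def[abs_def] Bochner_Integration.integral_sum
        integrable_measure_pmf_finite expectation_emp_pmf_sq[OF fin n])
  also have "\<dots> = (\<Sum>y\<in>set_pmf p. pmf p y + (1 - pmf p y) / n)"
  proof (intro sum.cong refl)
    fix y assume "y \<in> set_pmf p"
    then show "((pmf p y)\<^sup>2 + pmf p y * (1 - pmf p y) / n) / pmf p y = pmf p y + (1 - pmf p y) / n"
      using pmf_positive[of y p] n by (simp add: field_simps power2_eq_square)
  qed
  also have "\<dots> = 1 + (real (card (set_pmf p)) - 1) / n"
    using sum_pmf_eq_1[OF fin order.refl]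
    by (simp add: sum.distrib sum_subtractf flip: sum_divide_distrib)
  finally show ?thesis .
qed

lemma emp_sq_ratio_pos:
  assumes fin: "finite (set_pmf p)" and xs: "set xs \<subseteq> set_pmf p" "xs \<noteq> []"
  shows "emp_sq_ratio p xs > 0"
proof -
  obtain y where y: "y \<in> set xs" using xs by (cases xs) auto
  then have "0 < (emp_pmf xs y)\<^sup>2 / pmf p y"
    using xs by (auto simp: emp_pmf_def count_list_0_iff pmf_positive)
  also have "\<dots> \<le> emp_sq_ratio p xs"
    unfolding emp_sq_ratio_def using fin y xs by (intro member_le_sum) auto
  finally show ?thesis .
qed

lemma expectation_plugin_H_le_entropy:
  assumes fin: "finite (set_pmf p)" and n: "n > 0"
  shows "measure_pmf.expectation (replicate_pmf n p) plugin_H \<le> pmf_entropy p"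
proof -
  have "measure_pmf.expectation (replicate_pmf n p) plugin_H
     \<le> measure_pmf.expectation (replicate_pmf n p) (emp_cross_entropy p)"
    using n finite_set_replicate_pmf[OF fin]
    by (intro expectation_mono_finite_pmf plugin_H_le_emp_cross_entropy[OF fin])
      (auto simp: set_replicate_pmf)
  then show ?thesis by (simp add: expectation_emp_cross_entropy[OF fin n])
qed

lemma entropy_minus_ln_le_expectation_plugin_H:
  assumes fin: "finite (set_pmf p)" and n: "n > 0" and m: "real (card (set_pmf p)) \<le> m"
  shows "pmf_entropy p - ln (1 + (m - 1) / n) \<le> measure_pmf.expectation (replicate_pmf n p) plugin_H"
proof -
  define q where "q = replicate_pmf n p"
  define \<mu> where "\<mu> = 1 + (real (card (set_pmf p)) - 1) / n"
  have fin': "finite (set_pmf q)" unfolding q_def by (rule finite_set_replicate_pmf[OF fin])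
  have samples: "set xs \<subseteq> set_pmf p" "xs \<noteq> []" if "xs \<in> set_pmf q" for xs
    using that n by (auto simp: q_def set_replicate_pmf)
  have "card (set_pmf p) \<ge> 1"
    using fin set_pmf_not_empty[of p] by (simp add: Suc_le_eq card_gt_0_iff)
  then have \<mu>: "\<mu> > 0" using n by (simp add: \<mu>_def add_pos_nonneg)
  have "measure_pmf.expectation q (\<lambda>xs. ln (emp_sq_ratio p xs))
      \<le> measure_pmf.expectation q (\<lambda>xs. ln \<mu> + emp_sq_ratio p xs / \<mu> - 1)"
    using \<mu> samples emp_sq_ratio_pos[OF fin]
    by (intro expectation_mono_finite_pmf[OF fin'] ln_le_tangent) auto
  also have "\<dots> = ln \<mu>"
    using \<mu> fin' by (simp add: integrable_measure_pmf_finite q_def expectation_emp_sq_ratio[OF fin n] \<mu>_def)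
  also have "\<dots> \<le> ln (1 + (m - 1) / n)"
    using \<mu> m n divide_right_mono[of "real (card (set_pmf p)) - 1" "m - 1" n] by (simp add: \<mu>_def)
  finally have ln_ratio: "measure_pmf.expectation q (\<lambda>xs. ln (emp_sq_ratio p xs)) \<le> ln (1 + (m - 1) / n)" .
  have "pmf_entropy p - measure_pmf.expectation q (\<lambda>xs. ln (emp_sq_ratio p xs))
      = measure_pmf.expectation q (\<lambda>xs. emp_cross_entropy p xs - ln (emp_sq_ratio p xs))"
    using fin' by (simp add: integrable_measure_pmf_finite q_def expectation_emp_cross_entropy[OF fin n])
  also have "\<dots> \<le> measure_pmf.expectation q plugin_H"
    using samples
    by (intro expectation_mono_finite_pmf[OF fin'] emp_cross_entropy_minus_ln_emp_sq_ratio_le_plugin_H[OF fin])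
  finally show ?thesis using ln_ratio by (simp add: q_def)
qed

lemma pmf_entropy_nonneg: "0 \<le> pmf_entropy p"
  unfolding pmf_entropy_def shannon_H_def
  by (simp add: sum_nonpos mult_nonneg_nonpos pmf_positive pmf_le_1)

lemma plugin_H_singleton: "plugin_H [x] = 0"
  by (simp add: plugin_H_def shannon_H_def emp_pmf_def)

lemma pmf_entropy_le_ln_card:
  assumes fin: "finite (set_pmf p)" and m: "real (card (set_pmf p)) \<le> real m"
  shows "pmf_entropy p \<le> ln (real m)"
proof -
  have "measure_pmf.expectation (replicate_pmf 1 p) plugin_H = 0"
    by (simp only: replicate_pmf_1) (simp add: plugin_H_singleton)
  then show ?thesis using entropy_minus_ln_le_expectation_plugin_H[OF fin _ m, of 1] by simp
qed

section \<open>Concentration of the index\<close>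

definition conf_width :: "nat \<Rightarrow> real \<Rightarrow> real" where
  "conf_width s \<delta> = sqrt (2 * (ln (real s))\<^sup>2 / real s * ln (2 / \<delta>))"

lemma ucd_eq_conf_width:
  "ucd m xs \<delta> = ln (1 + (real m - 1) / real (length xs)) + conf_width (length xs) \<delta>"
  by (simp add: ucd_def conf_width_def Let_def)

lemma conf_width_Suc_0 [simp]: "conf_width (Suc 0) \<delta> = 0"
  by (simp add: conf_width_def)

lemma mcdiarmid_conf_width:
  fixes f :: "'a list \<Rightarrow> real"
  assumes fin: "finite (set_pmf p)" and s: "2 \<le> s" and \<delta>: "0 < \<delta>" "\<delta> \<le> 1"
    and bd: "bounded_differences s (2 * ln (real s) / real s) f"
  shows "measure_pmf.prob (replicate_pmf s p)
           {xs. f xs - measure_pmf.expectation (replicate_pmf s p) f \<ge> conf_width s \<delta>} \<le> \<delta> / 2"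
proof -
  have ln_s: "ln (real s) > 0" using s by simp
  have ln_\<delta>: "ln (2 / \<delta>) > 0" using \<delta> by simp
  have "(conf_width s \<delta>)\<^sup>2 = 2 * (ln (real s))\<^sup>2 / real s * ln (2 / \<delta>)"
    unfolding conf_width_def using ln_s ln_\<delta> s by (subst real_sqrt_pow2) auto
  then have exponent: "- 2 * (conf_width s \<delta>)\<^sup>2 / (real s * (2 * ln (real s) / real s)\<^sup>2) = - ln (2 / \<delta>)"
    using ln_s s by (simp add: field_simps power2_eq_square)
  have "conf_width s \<delta> > 0"
    unfolding conf_width_def using s ln_\<delta> by (intro real_sqrt_gt_zero mult_pos_pos divide_pos_pos) auto
  then have "measure_pmf.prob (replicate_pmf s p)
           {xs. f xs - measure_pmf.expectation (replicate_pmf s p) f \<ge> conf_width s \<delta>}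
      \<le> exp (- 2 * (conf_width s \<delta>)\<^sup>2 / (real s * (2 * ln (real s) / real s)\<^sup>2))"
    using s ln_s by (intro mcdiarmid_inequality[OF fin bd]) auto
  also have "\<dots> = exp (- ln (2 / \<delta>))" by (simp only: exponent)
  also have "\<dots> = \<delta> / 2" using \<delta> by (simp add: exp_minus)
  finally show ?thesis .
qed

lemma prob_plugin_index_lt_entropy:
  assumes fin: "finite (set_pmf p)" and m: "real (card (set_pmf p)) \<le> real m"
    and s: "1 \<le> s" and \<delta>: "0 < \<delta>" "\<delta> \<le> 1"
  shows "measure_pmf.prob (replicate_pmf s p) {xs. plugin_H xs + ucd m xs \<delta> < pmf_entropy p} \<le> \<delta> / 2"
proof (cases "s = 1")
  case True
  have "m \<ge> 1"
    using m fin set_pmf_not_empty[of p] by (metis card_gt_0_iff le_trans of_nat_le_iff Suc_le_eq One_nat_def)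
  then have "pmf_entropy p \<le> plugin_H [x] + ucd m [x] \<delta>" for x :: 'a
    using pmf_entropy_le_ln_card[OF fin m] by (simp add: plugin_H_singleton ucd_eq_conf_width)
  then have "measure_pmf.prob (replicate_pmf s p) {xs. plugin_H xs + ucd m xs \<delta> < pmf_entropy p} = 0"
    using True by (intro prob_eq_0_on_set_pmf) (auto simp: set_replicate_pmf length_Suc_conv not_less)
  then show ?thesis using \<delta> by simp
next
  case False
  then have s2: "2 \<le> s" using s by simp
  have lower: "pmf_entropy p - ln (1 + (real m - 1) / s) \<le> measure_pmf.expectation (replicate_pmf s p) plugin_H"
    using entropy_minus_ln_le_expectation_plugin_H[OF fin _ m, of s] s by simp
  have "measure_pmf.prob (replicate_pmf s p) {xs. plugin_H xs + ucd m xs \<delta> < pmf_entropy p}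
      \<le> measure_pmf.prob (replicate_pmf s p) {xs. - plugin_H xs
           - measure_pmf.expectation (replicate_pmf s p) (\<lambda>xs. - plugin_H xs) \<ge> conf_width s \<delta>}"
    using lower by (intro prob_mono_on_set_pmf) (auto simp: set_replicate_pmf ucd_eq_conf_width)
  also have "\<dots> \<le> \<delta> / 2"
    using s2 by (intro mcdiarmid_conf_width[OF fin s2 \<delta>] bounded_differences_uminus bounded_differences_plugin_H)
  finally show ?thesis .
qed

lemma prob_plugin_index_ge:
  assumes fin: "finite (set_pmf p)" and s: "1 \<le> s" and \<delta>: "0 < \<delta>" "\<delta> \<le> 1"
    and gap: "ln (1 + (real m - 1) / real s) + 2 * conf_width s \<delta> < H - pmf_entropy p"
  shows "measure_pmf.prob (replicate_pmf s p) {xs. H \<le> plugin_H xs + ucd m xs \<delta>} \<le> \<delta> / 2"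
proof (cases "s = 1")
  case True
  then have "plugin_H [x] + ucd m [x] \<delta> < H" for x :: 'a
    using gap pmf_entropy_nonneg[of p] by (simp add: plugin_H_singleton ucd_eq_conf_width)
  then have "measure_pmf.prob (replicate_pmf s p) {xs. H \<le> plugin_H xs + ucd m xs \<delta>} = 0"
    using True by (intro prob_eq_0_on_set_pmf) (auto simp: set_replicate_pmf length_Suc_conv not_le)
  then show ?thesis using \<delta> by simp
next
  case False
  then have s2: "2 \<le> s" using s by simp
  have upper: "measure_pmf.expectation (replicate_pmf s p) plugin_H \<le> pmf_entropy p"
    using expectation_plugin_H_le_entropy[OF fin, of s] s by simp
  have "measure_pmf.prob (replicate_pmf s p) {xs. H \<le> plugin_H xs + ucd m xs \<delta>}
      \<le> measure_pmf.prob (replicate_pmf s p) {xs. plugin_H xs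
           - measure_pmf.expectation (replicate_pmf s p) plugin_H \<ge> conf_width s \<delta>}"
    using upper gap by (intro prob_mono_on_set_pmf) (auto simp: set_replicate_pmf ucd_eq_conf_width)
  also have "\<dots> \<le> \<delta> / 2"
    using s2 by (intro mcdiarmid_conf_width[OF fin s2 \<delta>] bounded_differences_plugin_H)
  finally show ?thesis .
qed

section \<open>The table of symbols\<close>

definition arm_samples :: "(nat \<times> nat \<Rightarrow> 'a) \<Rightarrow> nat \<Rightarrow> nat \<Rightarrow> 'a list" where
  "arm_samples \<omega> j s = map (\<lambda>k. \<omega> (j, k)) [0..<s]"

lemma product_prob_space_imab:
  "product_prob_space (\<lambda>(i, k :: nat). measure_pmf (p i))"
proof -
  have "prob_space ((\<lambda>(i, k :: nat). measure_pmf (p i)) ik)" for ik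
    by (cases ik) (simp add: prob_space_measure_pmf)
  then show ?thesis
    by (intro product_prob_space.intro product_sigma_finite.intro product_prob_space_axioms.intro)
      (auto intro: prob_space_imp_sigma_finite)
qed

lemma prob_space_imab_space: "prob_space (imab_space p)"
proof -
  interpret product_prob_space "\<lambda>(i, k :: nat). measure_pmf (p i)" UNIV
    by (rule product_prob_space_imab)
  show ?thesis unfolding imab_space_def by unfold_locales
qed

lemma space_imab_space [simp]: "space (imab_space p) = UNIV"
  by (auto simp: imab_space_def space_PiM PiE_def extensional_def Pi_def split: prod.splits)

lemma sets_imab_space_Collect:
  assumes "finite J"
  shows "{\<omega>. \<forall>ik\<in>J. \<omega> ik \<in> X ik} \<in> sets (imab_space p)"
proof -
  have "{\<omega>. \<forall>ik\<in>J. \<omega> ik \<in> X ik} = prod_emb UNIV (\<lambda>(i, k). measure_pmf (p i)) J (Pi\<^sub>E J X)"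
    by (auto simp: prod_emb_def space_PiM)
  also have "\<dots> \<in> sets (imab_space p)"
    unfolding imab_space_def using assms by (intro sets_PiM_I) auto
  finally show ?thesis .
qed

lemma measure_imab_space_Collect:
  assumes "finite J"
  shows "measure (imab_space p) {\<omega>. \<forall>ik\<in>J. \<omega> ik \<in> X ik}
          = (\<Prod>ik\<in>J. measure_pmf.prob (p (fst ik)) (X ik))"
proof -
  interpret product_prob_space "\<lambda>(i, k :: nat). measure_pmf (p i)" UNIV
    by (rule product_prob_space_imab)
  have "emeasure (imab_space p) {\<omega>. \<forall>ik\<in>J. \<omega> ik \<in> X ik}
      = (\<Prod>ik\<in>J. emeasure ((\<lambda>(i, k). measure_pmf (p i)) ik) (X ik))"
    using emeasure_PiM_Collect[of J X] assms space_imab_space[of p]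
    unfolding imab_space_def by (simp split: prod.splits)
  also have "\<dots> = (\<Prod>ik\<in>J. ennreal (measure_pmf.prob (p (fst ik)) (X ik)))"
    by (intro prod.cong refl) (auto simp: measure_pmf.emeasure_eq_measure split: prod.splits)
  also have "\<dots> = ennreal (\<Prod>ik\<in>J. measure_pmf.prob (p (fst ik)) (X ik))"
    by (simp add: prod_ennreal)
  finally show ?thesis
    by (simp add: imab_space_def P.emeasure_eq_measure prod_nonneg)
qed

lemma measure_imab_space_arm_samples_eq:
  assumes "length xs = s"
  shows "{\<omega>. arm_samples \<omega> j s = xs} \<in> sets (imab_space p)"
    and "measure (imab_space p) {\<omega>. arm_samples \<omega> j s = xs} = pmf (replicate_pmf s (p j)) xs"
proof -
  define J where "J = (\<lambda>k. (j, k)) ` {..<s}"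
  have eq: "{\<omega>. arm_samples \<omega> j s = xs} = {\<omega>. \<forall>ik\<in>J. \<omega> ik \<in> {xs ! snd ik}}"
    using assms by (auto simp: J_def arm_samples_def list_eq_iff_nth_eq)
  show "{\<omega>. arm_samples \<omega> j s = xs} \<in> sets (imab_space p)"
    unfolding eq J_def by (rule sets_imab_space_Collect) simp
  have "measure (imab_space p) {\<omega>. arm_samples \<omega> j s = xs} = (\<Prod>k<s. pmf (p j) (xs ! k))"
    unfolding eq J_def
    by (subst measure_imab_space_Collect) (simp_all add: prod.reindex inj_on_def measure_pmf_single)
  also have "\<dots> = pmf (replicate_pmf s (p j)) xs"
    using assms by (simp add: pmf_replicate_pmf prod.list_conv_set_nth atLeast0LessThan)
  finally show "measure (imab_space p) {\<omega>. arm_samples \<omega> j s = xs} = pmf (replicate_pmf s (p j)) xs" .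
qed

text \<open>For an uncountable alphabet the event \<open>{\<omega>. arm_samples \<omega> j s \<in> E}\<close> need not be measurable
  in the product \<open>\<sigma>\<close>-algebra; it is, however, covered by a finite union of cylinders together
  with a null set, which bounds its outer probability.\<close>

lemma arm_samples_event_cover:
  fixes p :: "nat \<Rightarrow> 'a pmf"
  assumes fin: "finite (set_pmf (p j))"
  shows "\<exists>T\<in>sets (imab_space p). {\<omega>. arm_samples \<omega> j s \<in> E} \<subseteq> T \<and>
           measure (imab_space p) T \<le> measure_pmf.prob (replicate_pmf s (p j)) E"
proof -
  interpret prob_space "imab_space p" by (rule prob_space_imab_space)
  define D where "D = E \<inter> set_pmf (replicate_pmf s (p j))"
  define Cyl where "Cyl xs = {\<omega>. arm_samples \<omega> j s = xs}" for xs :: "'a list"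
  define Null where "Null k = {\<omega>. \<forall>ik\<in>{(j, k)}. \<omega> ik \<in> - set_pmf (p j)}" for k :: nat
  have D: "finite D" "\<And>xs. xs \<in> D \<Longrightarrow> length xs = s"
    using finite_set_replicate_pmf[OF fin] by (auto simp: D_def set_replicate_pmf)
  have Cyl: "Cyl xs \<in> sets (imab_space p)" "measure (imab_space p) (Cyl xs) = pmf (replicate_pmf s (p j)) xs"
    if "xs \<in> D" for xs
    using measure_imab_space_arm_samples_eq[OF D(2)[OF that]] by (simp_all add: Cyl_def)
  have Null: "Null k \<in> sets (imab_space p)" "measure (imab_space p) (Null k) = 0" for k
    using sets_imab_space_Collect[of "{(j, k)}" "\<lambda>_. - set_pmf (p j)" p]
      measure_imab_space_Collect[of "{(j, k)}" p "\<lambda>_. - set_pmf (p j)"]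
    by (simp_all add: Null_def measure_pmf_zero_iff)
  define T where "T = (\<Union>xs\<in>D. Cyl xs) \<union> (\<Union>k<s. Null k)"
  have T: "T \<in> sets (imab_space p)"
    unfolding T_def using D(1) Cyl Null by (intro sets.Un sets.finite_UN) auto
  have "{\<omega>. arm_samples \<omega> j s \<in> E} \<subseteq> T"
  proof
    fix \<omega> assume "\<omega> \<in> {\<omega>. arm_samples \<omega> j s \<in> E}"
    then have "arm_samples \<omega> j s \<in> D \<or> (\<exists>k<s. \<omega> (j, k) \<notin> set_pmf (p j))"
      by (auto simp: D_def set_replicate_pmf arm_samples_def)
    then show "\<omega> \<in> T" by (auto simp: T_def Cyl_def Null_def)
  qed
  moreover have "measure (imab_space p) T \<le> measure_pmf.prob (replicate_pmf s (p j)) E"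
  proof -
    have "measure (imab_space p) T
        \<le> (\<Sum>xs\<in>D. measure (imab_space p) (Cyl xs)) + (\<Sum>k<s. measure (imab_space p) (Null k))"
      unfolding T_def using D(1) Cyl Null
      by (intro order.trans[OF measure_Un_le] add_mono measure_UNION_le sets.finite_UN) auto
    also have "\<dots> = measure_pmf.prob (replicate_pmf s (p j)) D"
      using D(1) Cyl Null by (simp add: measure_measure_pmf_finite)
    also have "\<dots> = measure_pmf.prob (replicate_pmf s (p j)) E"
      by (simp add: D_def measure_Int_set_pmf)
    finally show ?thesis .
  qed
  ultimately show ?thesis using T by blast
qed

text \<open>Expectation bound through outer probabilities; if \<open>f\<close> is not integrable, its integral is
  \<open>0\<close> by convention and the bound is trivial.\<close>

lemma integral_le_of_covered_indicator_sum:
  fixes f :: "'b \<Rightarrow> real"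
  assumes M: "prob_space M" and F: "finite F" and c: "0 \<le> c"
    and f: "\<And>\<omega>. \<omega> \<in> space M \<Longrightarrow> f \<omega> \<le> c + (\<Sum>k\<in>F. indicator (A k) \<omega>)"
    and cover: "\<And>k. k \<in> F \<Longrightarrow> \<exists>T\<in>sets M. A k \<subseteq> T \<and> measure M T \<le> b k"
  shows "integral\<^sup>L M f \<le> c + sum b F"
proof -
  interpret prob_space M by (rule M)
  obtain T where T: "\<And>k. k \<in> F \<Longrightarrow> T k \<in> sets M \<and> A k \<subseteq> T k \<and> measure M (T k) \<le> b k"
    using cover by metis
  define g where "g \<omega> = c + (\<Sum>k\<in>F. indicator (T k) \<omega> :: real)" for \<omega>
  have ind: "integrable M (indicator (T k) :: 'b \<Rightarrow> real)" if "k \<in> F" for k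
    using T[OF that] by (intro integrable_real_indicator) (auto simp: less_top[symmetric])
  have sum_ind: "integrable M (\<lambda>\<omega>. \<Sum>k\<in>F. indicator (T k) \<omega> :: real)"
    using ind by (rule Bochner_Integration.integrable_sum)
  have g: "integrable M g"
    unfolding g_def using sum_ind by simp
  have "f \<omega> \<le> g \<omega>" if \<omega>: "\<omega> \<in> space M" for \<omega>
  proof -
    have "indicator (A k) \<omega> \<le> (indicator (T k) \<omega> :: real)" if "k \<in> F" for k
      using T[OF that] by (auto simp: indicator_def)
    then have "(\<Sum>k\<in>F. indicator (A k) \<omega>) \<le> (\<Sum>k\<in>F. indicator (T k) \<omega> :: real)"
      by (rule sum_mono)
    then show ?thesis using f[OF \<omega>] unfolding g_def by linarith
  qed
  moreover have "integral\<^sup>L M g = c + (\<Sum>k\<in>F. measure M (T k))"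
    unfolding g_def using sum_ind ind T
    by (simp add: Bochner_Integration.integral_sum prob_space Int_absorb2 sets.sets_into_space)
  moreover have "\<dots> \<le> c + sum b F"
    using T by (intro add_left_mono sum_mono) auto
  moreover have "0 \<le> sum b F"
    using T by (intro sum_nonneg) (force intro: order.trans[OF measure_nonneg])
  ultimately show ?thesis
    using g c by (cases "integrable M f") (auto intro: order.trans[OF integral_mono] simp: not_integrable_integral_eq)
qed

section \<open>Numerical inequalities\<close>

lemma powr_minus_le_telescoping:
  fixes r x :: real
  assumes r: "r > 0" and x: "x \<ge> 2"
  shows "x powr (- 1 - r) \<le> ((x - 1) powr (- r) - x powr (- r)) / r"
proof -
  have x0: "x > 0" "x - 1 > 0" using x by auto
  have "1 / x \<le> ln (x / (x - 1))"
    using x0 ln_le_minus_one[of "(x - 1) / x"] by (simp add: ln_div field_simps)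
  then have "r * (1 / x) \<le> r * ln (x / (x - 1))"
    using r by (intro mult_left_mono) auto
  then have "x powr (- r) * (1 + r * (1 / x)) \<le> x powr (- r) * exp (r * ln (x / (x - 1)))"
    by (intro mult_left_mono order.trans[OF _ exp_ge_add_one_self]) auto
  also have "\<dots> = (x - 1) powr (- r)"
    using x0 by (simp add: powr_def ln_div algebra_simps flip: exp_add)
  finally have "r * (x powr (- r) / x) \<le> (x - 1) powr (- r) - x powr (- r)"
    by (simp add: algebra_simps)
  moreover have "x powr (- r) / x = x powr (- 1 - r)"
    using x0 by (simp add: powr_diff powr_minus field_simps powr_add)
  ultimately show ?thesis using r by (simp add: field_simps)
qed

lemma sum_pred_mult_powr_le:
  fixes \<alpha> :: real
  assumes "\<alpha> > 2"
  shows "(\<Sum>\<tau>\<in>{1..t}. real (\<tau> - 1) * real \<tau> powr (- \<alpha>)) \<le> 1 / (\<alpha> - 2)"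
proof -
  define r where "r = \<alpha> - 2"
  have r: "r > 0" using assms by (simp add: r_def)
  have telescope: "(\<Sum>\<tau>\<in>{1..t}. real (\<tau> - 1) * real \<tau> powr (- \<alpha>)) \<le> (1 - real t powr (- r)) / r"
    if "t \<ge> 1" for t
    using that
  proof (induction t rule: dec_induct)
    case (step n)
    have "real (Suc n - 1) * real (Suc n) powr (- \<alpha>) \<le> real (Suc n) * real (Suc n) powr (- \<alpha>)"
      by (intro mult_right_mono) auto
    also have "\<dots> = real (Suc n) powr (- 1 - r)"
      by (simp add: r_def powr_add[of _ 1 "- \<alpha>", simplified])
    also have "\<dots> \<le> (real n powr (- r) - real (Suc n) powr (- r)) / r"
      using powr_minus_le_telescoping[OF r, of "real (Suc n)"] step.hyps by simp
    finally show ?case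
      using step.IH by (simp add: diff_divide_distrib)
  qed simp
  show ?thesis
  proof (cases "t \<ge> 1")
    case True
    have "(1 - real t powr (- r)) / r \<le> 1 / r" using r by (intro divide_right_mono) auto
    then show ?thesis using telescope[OF True] by (simp add: r_def)
  qed (use assms in simp)
qed

lemma exp_1_ge: "2718 / 1000 \<le> exp (1::real)"
  using e_approx_32 by (simp add: abs_if split: if_split_asm)

text \<open>The difference of the two sides has its minimum, about \<open>0.017\<close>, near \<open>L = 0.7\<close>; hence the
  tangent to \<open>ln\<close> at \<open>7 / 10\<close>.\<close>

lemma ln_15_mult_sq_add_le_sqrt_15_mult:
  assumes L: "L > 0"
  shows "ln (15 * L\<^sup>2) + L \<le> sqrt 15 * L"
proof -
  have "(735 / 100 :: real) \<le> exp 2"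
    using power_mono[OF exp_1_ge, of 2] by (simp add: power2_eq_square flip: exp_add)
  then have ln_735: "ln (735 / 100 :: real) \<le> 2"
    using ln_le_cancel_iff[of "735 / 100" "exp 2"] by simp
  have "ln (15 * L\<^sup>2) + L = ln 15 + 2 * ln L + L"
    using L by (simp add: ln_mult ln_realpow)
  also have "\<dots> \<le> ln 15 + 2 * (ln (7 / 10) + L / (7 / 10) - 1) + L"
    using L ln_le_tangent[of L "7 / 10"] by simp
  also have "\<dots> = ln (735 / 100) - 2 + 27 / 7 * L"
  proof -
    have "ln (735 / 100 :: real) = ln 15 + 2 * ln (7 / 10)"
      using ln_mult[of 15 "(7 / 10) * (7 / 10)"] ln_mult[of "7 / 10" "7 / 10"] by simp
    then show ?thesis by simp
  qed
  also have "\<dots> \<le> sqrt 15 * L"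
  proof -
    have "27 / 7 \<le> sqrt (15 :: real)" by (rule real_le_rsqrt) (simp add: power2_eq_square)
    then have "27 / 7 * L \<le> sqrt 15 * L" using L by (intro mult_right_mono) auto
    then show ?thesis using ln_735 by linarith
  qed
  finally show ?thesis .
qed

lemma two_ln_le_div_of_le:
  fixes c y0 y :: real
  assumes c: "0 < c" "2 * c \<le> y0" and y: "y0 \<le> y" and start: "2 * ln y0 \<le> y0 / c"
  shows "2 * ln y \<le> y / c"
proof -
  have y0: "y0 > 0" using c by linarith
  have "2 * ln y \<le> 2 * ln y0 + (y - y0) * (2 / y0)"
    using ln_le_tangent[of y y0] y0 y by (simp add: field_simps)
  also have "\<dots> \<le> y0 / c + (y - y0) * (1 / c)"
    using c y0 y start by (intro add_mono mult_left_mono) (auto simp: field_simps)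
  also have "\<dots> = y / c" by (simp add: diff_divide_distrib)
  finally show ?thesis .
qed

text \<open>With \<open>y = sqrt s\<close> and \<open>c = sqrt S\<close> the claim reads \<open>2 ln y \<le> y / c\<close>. For small \<open>S\<close> this
  is the tangent bound \<open>ln y \<le> y / e\<close>; otherwise it holds at \<open>y\<^sub>0 = sqrt 15 * ln S * c\<close>, which is
  at most \<open>y\<close> by hypothesis, and propagates to larger \<open>y\<close>.\<close>

lemma mult_ln_sq_le_of_Lambda_2_le:
  assumes S: "S > 0" and s: "1 \<le> s" and bound: "15 * Lambda 2 S \<le> s"
  shows "S * (ln s)\<^sup>2 \<le> s"
proof -
  define y c where "y = sqrt s" and "c = sqrt S"
  have y: "y > 0" "y\<^sup>2 = s" and c: "c > 0" "c\<^sup>2 = S"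
    using s S by (auto simp: y_def c_def)
  have ln_s: "ln s = 2 * ln y"
    using y ln_realpow[of y 2] by simp
  have "2 * ln y \<le> y / c"
  proof (cases "S \<le> exp 2 / 4")
    case True
    have "c \<le> sqrt ((exp 1 / 2)\<^sup>2)"
      unfolding c_def using True by (intro real_sqrt_le_mono) (simp add: power2_eq_square flip: exp_add)
    then have c_le: "c \<le> exp 1 / 2" by simp
    have "2 * ln y \<le> y / (exp 1 / 2)"
      using ln_le_tangent[of y "exp 1"] y by (simp add: field_simps)
    also have "\<dots> \<le> y / c"
      using c_le c y by (intro divide_left_mono) auto
    finally show ?thesis .
  next
    case False
    define L where "L = ln S"
    have "ln (exp 2 / 4) < L" using False S by (simp add: L_def)
    moreover have "ln (exp 2 / 4 :: real) = 2 - 2 * ln 2"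
      by (simp add: ln_div ln_realpow[of 2 2, simplified])
    ultimately have L: "L > 11 / 18" using ln2_le_25_over_36 by simp
    define y0 where "y0 = sqrt 15 * L * c"
    have "2 * c \<le> y0"
    proof -
      have "7 / 2 \<le> sqrt (15 :: real)" by (rule real_le_rsqrt) (simp add: power2_eq_square)
      then have "7 / 2 * (11 / 18) \<le> sqrt 15 * L" using L by (intro mult_mono) auto
      then have "2 * c \<le> (sqrt 15 * L) * c" using c by (intro mult_right_mono) auto
      then show ?thesis by (simp add: y0_def)
    qed
    moreover have "y0 \<le> y"
    proof -
      have "y0\<^sup>2 \<le> y\<^sup>2"
        using bound y(2) by (simp add: y0_def Lambda_def L_def power_mult_distrib c mult_ac)
      then show ?thesis using y(1) power2_le_imp_le by fastforce
    qed
    moreover have "2 * ln y0 \<le> y0 / c"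
    proof -
      have "y0\<^sup>2 = 15 * L\<^sup>2 * S"
        by (simp add: y0_def power_mult_distrib c)
      moreover have "y0 > 0" using L c by (simp add: y0_def)
      ultimately have "2 * ln y0 = ln (15 * L\<^sup>2 * S)"
        using ln_realpow[of y0 2] by simp
      also have "\<dots> = ln (15 * L\<^sup>2) + L"
        using L S by (subst ln_mult) (auto simp: L_def)
      also have "\<dots> \<le> sqrt 15 * L" using L by (intro ln_15_mult_sq_add_le_sqrt_15_mult) simp
      also have "\<dots> = y0 / c" using c by (simp add: y0_def)
      finally show ?thesis .
    qed
    ultimately show ?thesis by (rule two_ln_le_div_of_le[OF c(1)])
  qed
  then have "ln s \<le> y / c" by (simp add: ln_s)
  then have "(ln s)\<^sup>2 \<le> (y / c)\<^sup>2"
    using s by (intro power_mono) auto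
  also have "\<dots> = s / S" using y c by (simp add: power_divide)
  finally show ?thesis using S by (simp add: pos_le_divide_eq mult.commute)
qed

section \<open>Runs of the algorithm\<close>

lemma obs_append_single: "obs (h @ [(a, v)]) j = obs h j @ (if a = j then [v] else [])"
  by (simp add: obs_def)

lemma length_run [simp]: "length (run ch \<omega> \<tau>) = \<tau>"
  by (induction \<tau>) (simp_all add: Let_def)

lemma plays_Suc:
  "plays ch \<omega> (Suc \<tau>) j = plays ch \<omega> \<tau> j + (if ch (Suc \<tau>) (run ch \<omega> \<tau>) = j then 1 else 0)"
  by (simp add: plays_def Let_def obs_append_single)

lemma plays_le: "plays ch \<omega> \<tau> j \<le> \<tau>"
  using length_filter_le[of _ "run ch \<omega> \<tau>"] by (simp add: plays_def obs_def)

lemma obs_run_eq_arm_samples: "obs (run ch \<omega> \<tau>) j = arm_samples \<omega> j (plays ch \<omega> \<tau> j)"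
proof (induction \<tau>)
  case 0
  then show ?case by (simp add: obs_def arm_samples_def plays_def)
next
  case (Suc \<tau>)
  define h where "h = run ch \<omega> \<tau>"
  define a where "a = ch (Suc \<tau>) h"
  have run: "run ch \<omega> (Suc \<tau>) = h @ [(a, \<omega> (a, length (obs h a)))]"
    by (simp only: run.simps Let_def h_def a_def)
  have IH: "obs h j = arm_samples \<omega> j (plays ch \<omega> \<tau> j)"
    using Suc.IH by (simp only: h_def)
  have "plays ch \<omega> (Suc \<tau>) j = plays ch \<omega> \<tau> j + (if a = j then 1 else 0)"
    by (simp only: plays_Suc h_def a_def)
  then show ?case
    using IH by (cases "a = j") (simp_all only: run obs_append_single, simp_all add: arm_samples_def)
qed

definition ucb_value :: "(nat \<Rightarrow> 'a set) \<Rightarrow> real \<Rightarrow> nat \<Rightarrow> nat \<Rightarrow> 'a list \<Rightarrow> real" where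
  "ucb_value X \<alpha> \<tau> j xs = plugin_H xs + ucd (card (X j)) xs (delta_conf \<alpha> \<tau>)"

text \<open>Arm \<open>i\<close> was chosen over arm \<open>is\<close>, so at least one of the two indices lies on the wrong
  side of \<open>H\<close>.\<close>

lemma late_play_imp_misranking:
  fixes ch :: "nat \<Rightarrow> (nat \<times> 'a) list \<Rightarrow> nat"
  assumes ch: "\<And>s h. ch s h \<in> ucb_argmax K X \<alpha> s h" and "is < K"
    and play: "ch \<tau> (run ch \<omega> (\<tau> - 1)) = i" and u: "1 \<le> u" "u \<le> plays ch \<omega> (\<tau> - 1) i"
    and \<tau>: "1 \<le> \<tau>"
  shows "\<exists>s\<in>{1..<\<tau>}. ucb_value X \<alpha> \<tau> is (arm_samples \<omega> is s) < H
           \<or> (u \<le> s \<and> H \<le> ucb_value X \<alpha> \<tau> i (arm_samples \<omega> i s))"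
proof -
  define h where "h = run ch \<omega> (\<tau> - 1)"
  define ni ns where "ni = plays ch \<omega> (\<tau> - 1) i" and "ns = plays ch \<omega> (\<tau> - 1) is"
  define v where "v j s = ucb_value X \<alpha> \<tau> j (arm_samples \<omega> j s)" for j s
  have obs: "obs h j = arm_samples \<omega> j (plays ch \<omega> (\<tau> - 1) j)" for j
    by (simp add: h_def obs_run_eq_arm_samples)
  have index: "ucb_index X \<alpha> \<tau> h j = (if plays ch \<omega> (\<tau> - 1) j = 0 then \<infinity> else ereal (v j (plays ch \<omega> (\<tau> - 1) j)))"
    for j
    by (simp add: ucb_index_def obs v_def ucb_value_def arm_samples_def)
  have "ch \<tau> h \<in> ucb_argmax K X \<alpha> \<tau> h" by (rule ch)
  then have "ucb_index X \<alpha> \<tau> h is \<le> ucb_index X \<alpha> \<tau> h i"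
    using \<open>is < K\<close> play by (simp add: ucb_argmax_def h_def)
  moreover have "1 \<le> ni" using u by (simp add: ni_def)
  ultimately have "1 \<le> ns" "v is ns \<le> v i ni"
    by (auto simp: index ni_def ns_def split: if_splits)
  moreover have "ni < \<tau>" "ns < \<tau>"
    using plays_le[of ch \<omega> "\<tau> - 1" i] plays_le[of ch \<omega> "\<tau> - 1" "is"] \<tau>
    by (simp_all add: ni_def ns_def)
  ultimately have "ns \<in> {1..<\<tau>}" "ni \<in> {1..<\<tau>}" "v is ns \<le> v i ni" "u \<le> ni"
    using \<open>1 \<le> ni\<close> u by (auto simp: ni_def)
  then show ?thesis
    unfolding v_def[symmetric] by (cases "v is ns < H") auto
qed

lemma plays_le_threshold_plus_late_plays:
  "plays ch \<omega> t i \<le> u + (\<Sum>\<tau>\<in>{1..t}. of_bool (ch \<tau> (run ch \<omega> (\<tau> - 1)) = i \<and> u \<le> plays ch \<omega> (\<tau> - 1) i))"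
proof (induction t)
  case 0
  then show ?case by (simp add: plays_def obs_def)
next
  case (Suc t)
  have "(\<Sum>\<tau>\<in>{1..Suc t}. of_bool (ch \<tau> (run ch \<omega> (\<tau> - 1)) = i \<and> u \<le> plays ch \<omega> (\<tau> - 1) i))
      = (\<Sum>\<tau>\<in>{1..t}. of_bool (ch \<tau> (run ch \<omega> (\<tau> - 1)) = i \<and> u \<le> plays ch \<omega> (\<tau> - 1) i))
        + of_bool (ch (Suc t) (run ch \<omega> t) = i \<and> u \<le> plays ch \<omega> t i)"
    by (simp only: sum.cl_ivl_Suc) simp
  then show ?case
    using Suc.IH plays_Suc[of ch \<omega> t i] by (auto split: if_splits)
qed

lemma plays_le_threshold_plus_misrankings:
  fixes ch :: "nat \<Rightarrow> (nat \<times> 'a) list \<Rightarrow> nat"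
  assumes ch: "\<And>s h. ch s h \<in> ucb_argmax K X \<alpha> s h" and "is < K" and u: "1 \<le> u"
  shows "real (plays ch \<omega> t i) \<le> real u + (\<Sum>(\<tau>, s)\<in>Sigma {1..t} (\<lambda>\<tau>. {1..<\<tau>}).
           indicator ({\<omega>. ucb_value X \<alpha> \<tau> is (arm_samples \<omega> is s) < H} \<union>
                      {\<omega>. u \<le> s \<and> H \<le> ucb_value X \<alpha> \<tau> i (arm_samples \<omega> i s)}) \<omega>)"
    (is "_ \<le> _ + (\<Sum>(\<tau>, s)\<in>_. indicator (?E \<tau> s) \<omega>)")
proof -
  have late: "of_bool (ch \<tau> (run ch \<omega> (\<tau> - 1)) = i \<and> u \<le> plays ch \<omega> (\<tau> - 1) i)
      \<le> (\<Sum>s\<in>{1..<\<tau>}. indicator (?E \<tau> s) \<omega> :: real)" if \<tau>: "\<tau> \<in> {1..t}" for \<tau>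
  proof (cases "ch \<tau> (run ch \<omega> (\<tau> - 1)) = i \<and> u \<le> plays ch \<omega> (\<tau> - 1) i")
    case True
    then obtain s where s: "s \<in> {1..<\<tau>}" "\<omega> \<in> ?E \<tau> s"
      using late_play_imp_misranking[OF ch \<open>is < K\<close> _ u, of \<tau> \<omega> i H] \<tau> by auto
    then have "indicator (?E \<tau> s) \<omega> \<le> (\<Sum>s\<in>{1..<\<tau>}. indicator (?E \<tau> s) \<omega> :: real)"
      by (intro member_le_sum) auto
    then show ?thesis using True s by simp
  qed (auto intro: sum_nonneg)
  have "real (plays ch \<omega> t i)
      \<le> real u + (\<Sum>\<tau>\<in>{1..t}. of_bool (ch \<tau> (run ch \<omega> (\<tau> - 1)) = i \<and> u \<le> plays ch \<omega> (\<tau> - 1) i))"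
    using plays_le_threshold_plus_late_plays[of ch \<omega> t i u] by (simp flip: of_nat_sum of_nat_add)
  also have "\<dots> \<le> real u + (\<Sum>\<tau>\<in>{1..t}. \<Sum>s\<in>{1..<\<tau>}. indicator (?E \<tau> s) \<omega>)"
    by (intro add_left_mono sum_mono late)
  finally show ?thesis by (simp add: sum.Sigma)
qed

section \<open>The regret bound\<close>

lemma delta_conf_pos_le_1:
  assumes "1 \<le> \<tau>" "0 < \<alpha>"
  shows "0 < delta_conf \<alpha> \<tau>" "delta_conf \<alpha> \<tau> \<le> 1"
  using assms by (auto simp: delta_conf_def powr_minus inverse_le_1_iff ge_one_powr_ge_zero)

lemma bias_le_of_Gamma_bias_le:
  assumes Y: "1 \<le> card Y" and \<beta>\<Delta>: "0 < \<beta> * \<Delta>" and s: "1 \<le> s"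
    and \<Gamma>: "Gamma_bias \<alpha> \<beta> Y \<Delta> t \<le> real s"
  shows "ln (1 + (real (card Y) - 1) / real s) \<le> \<beta> * \<Delta> / 2"
proof -
  have "(real (card Y) - 1) / (exp (\<beta> * \<Delta> / 2) - 1) \<le> real s"
    using \<Gamma> by (simp add: Gamma_bias_def)
  then have "(real (card Y) - 1) / real s \<le> exp (\<beta> * \<Delta> / 2) - 1"
    using \<beta>\<Delta> s by (simp add: divide_le_eq mult.commute)
  moreover have "0 < 1 + (real (card Y) - 1) / real s" using Y s by (simp add: add_pos_nonneg)
  ultimately show ?thesis
    using ln_le_cancel_iff[of "1 + (real (card Y) - 1) / real s" "exp (\<beta> * \<Delta> / 2)"] by simp
qed

lemma conf_width_le_of_Gamma_bias_le:
  assumes \<alpha>: "0 < \<alpha>" and \<beta>: "\<beta> < 1" and \<Delta>: "0 < \<Delta>" and \<tau>: "1 \<le> \<tau>" "\<tau> \<le> t"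
    and s: "1 \<le> s" and \<Gamma>: "Gamma_bias \<alpha> \<beta> Y \<Delta> t \<le> real s"
  shows "conf_width s (delta_conf \<alpha> \<tau>) \<le> (1 - \<beta>) * \<Delta> / 2"
proof -
  define L where "L = ln (2 * real t powr \<alpha>)"
  define S where "S = 8 * L / ((1 - \<beta>)\<^sup>2 * \<Delta>\<^sup>2)"
  have "1 \<le> real \<tau> powr \<alpha>" "real \<tau> powr \<alpha> \<le> real t powr \<alpha>"
    using \<tau> \<alpha> by (auto intro: ge_one_powr_ge_zero powr_mono2)
  then have L\<tau>: "0 < ln (2 / delta_conf \<alpha> \<tau>)" "ln (2 / delta_conf \<alpha> \<tau>) \<le> L"
    using \<tau> by (simp_all add: L_def delta_conf_def powr_minus divide_inverse)
  then have S: "S > 0" using \<beta> \<Delta> by (simp add: S_def)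
  have "S * (ln (real s))\<^sup>2 \<le> real s"
    using \<Gamma> s by (intro mult_ln_sq_le_of_Lambda_2_le[OF S]) (simp_all add: Gamma_bias_def S_def L_def)
  then have "(ln (real s))\<^sup>2 / real s \<le> 1 / S" using s S by (simp add: field_simps)
  then have "2 * (ln (real s))\<^sup>2 / real s * ln (2 / delta_conf \<alpha> \<tau>) \<le> 2 * (1 / S) * L"
    using L\<tau> S by (intro mult_mono) auto
  also have "\<dots> = ((1 - \<beta>) * \<Delta> / 2)\<^sup>2"
    using L\<tau> \<beta> \<Delta> by (simp add: S_def field_simps power2_eq_square)
  finally have "conf_width s (delta_conf \<alpha> \<tau>) \<le> sqrt (((1 - \<beta>) * \<Delta> / 2)\<^sup>2)"
    unfolding conf_width_def by (rule real_sqrt_le_mono)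
  then show ?thesis using \<beta> \<Delta> by simp
qed

lemma misranking_event_cover:
  fixes p :: "nat \<Rightarrow> 'a pmf"
  assumes X_is: "finite (X is)" "set_pmf (p is) \<subseteq> X is"
    and X_i: "finite (X i)" "set_pmf (p i) \<subseteq> X i"
    and \<alpha>: "0 < \<alpha>" and \<beta>: "0 < \<beta>" "\<beta> < 1"
    and \<Delta>: "\<Delta> = pmf_entropy (p is) - pmf_entropy (p i)" "0 < \<Delta>"
    and \<tau>: "1 \<le> \<tau>" "\<tau> \<le> t" and s: "1 \<le> s" and u: "Gamma_bias \<alpha> \<beta> (X i) \<Delta> t \<le> real u"
  shows "\<exists>T\<in>sets (imab_space p).
           {\<omega>. ucb_value X \<alpha> \<tau> is (arm_samples \<omega> is s) < pmf_entropy (p is)} \<union>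
           {\<omega>. u \<le> s \<and> pmf_entropy (p is) \<le> ucb_value X \<alpha> \<tau> i (arm_samples \<omega> i s)} \<subseteq> T \<and>
           measure (imab_space p) T \<le> delta_conf \<alpha> \<tau>"
proof -
  define \<delta> where "\<delta> = delta_conf \<alpha> \<tau>"
  have \<delta>: "0 < \<delta>" "\<delta> \<le> 1" using delta_conf_pos_le_1[OF \<tau>(1) \<alpha>] by (simp_all add: \<delta>_def)
  have fin: "finite (set_pmf (p is))" "finite (set_pmf (p i))"
    using X_is X_i finite_subset by blast+
  obtain T1 where T1: "T1 \<in> sets (imab_space p)"
    "{\<omega>. ucb_value X \<alpha> \<tau> is (arm_samples \<omega> is s) < pmf_entropy (p is)} \<subseteq> T1"
    "measure (imab_space p) T1 \<le> measure_pmf.prob (replicate_pmf s (p is))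
        {xs. plugin_H xs + ucd (card (X is)) xs \<delta> < pmf_entropy (p is)}"
    using arm_samples_event_cover[of p "is" s "{xs. ucb_value X \<alpha> \<tau> is xs < pmf_entropy (p is)}"]
    using fin(1) by (auto simp: ucb_value_def \<delta>_def)
  have "measure (imab_space p) T1 \<le> \<delta> / 2"
    using T1(3) prob_plugin_index_lt_entropy[OF fin(1) _ s \<delta>] card_mono[OF X_is] by force
  obtain T2 where T2: "T2 \<in> sets (imab_space p)"
    "{\<omega>. u \<le> s \<and> pmf_entropy (p is) \<le> ucb_value X \<alpha> \<tau> i (arm_samples \<omega> i s)} \<subseteq> T2"
    "measure (imab_space p) T2 \<le> measure_pmf.prob (replicate_pmf s (p i))
        {xs. u \<le> s \<and> pmf_entropy (p is) \<le> plugin_H xs + ucd (card (X i)) xs \<delta>}"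
    using arm_samples_event_cover[of p i s
        "{xs. u \<le> s \<and> pmf_entropy (p is) \<le> ucb_value X \<alpha> \<tau> i xs}"]
    using fin(2) by (auto simp: ucb_value_def \<delta>_def)
  have "measure (imab_space p) T2 \<le> \<delta> / 2"
  proof (cases "u \<le> s")
    case True
    have "1 \<le> card (X i)"
      using X_i set_pmf_not_empty[of "p i"] by (auto simp: Suc_le_eq card_gt_0_iff)
    moreover have \<Gamma>: "Gamma_bias \<alpha> \<beta> (X i) \<Delta> t \<le> real s" using u True by linarith
    ultimately have "ln (1 + (real (card (X i)) - 1) / real s) + 2 * conf_width s \<delta>
        \<le> \<beta> * \<Delta> / 2 + (1 - \<beta>) * \<Delta>"
      using bias_le_of_Gamma_bias_le[OF _ _ s \<Gamma>] conf_width_le_of_Gamma_bias_le[OF \<alpha> \<beta>(2) \<Delta>(2) \<tau> s \<Gamma>]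
        \<beta> \<Delta> by (simp add: \<delta>_def)
    also have "\<dots> < pmf_entropy (p is) - pmf_entropy (p i)"
      using \<beta> \<Delta> by (simp add: algebra_simps)
    finally show ?thesis
      using T2(3) prob_plugin_index_ge[OF fin(2) s \<delta>] True by force
  qed (use T2(3) \<delta> in simp)
  have "measure (imab_space p) (T1 \<union> T2) \<le> \<delta>"
    using measure_Un_le[OF T1(1) T2(1)] \<open>measure (imab_space p) T1 \<le> \<delta> / 2\<close> \<open>measure (imab_space p) T2 \<le> \<delta> / 2\<close>
    by linarith
  moreover have "T1 \<union> T2 \<in> sets (imab_space p)" using T1(1) T2(1) by simp
  ultimately show ?thesis using T1(2) T2(2) unfolding \<delta>_def by blast
qed

lemma sum_delta_conf_le:
  assumes "\<alpha> > 2"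
  shows "(\<Sum>(\<tau>, s)\<in>Sigma {1..t} (\<lambda>\<tau>. {1..<\<tau>}). delta_conf \<alpha> \<tau>) \<le> 1 / (\<alpha> - 2)"
  using sum_pred_mult_powr_le[OF assms, of t] by (simp add: sum.Sigma[symmetric] delta_conf_def)

lemma expected_plays_le:
  fixes p :: "nat \<Rightarrow> 'a pmf" and ch :: "nat \<Rightarrow> (nat \<times> 'a) list \<Rightarrow> nat"
  assumes ch: "\<And>s h. ch s h \<in> ucb_argmax K X \<alpha> s h" and "is < K"
    and X_is: "finite (X is)" "set_pmf (p is) \<subseteq> X is"
    and X_i: "finite (X i)" "set_pmf (p i) \<subseteq> X i"
    and \<alpha>: "\<alpha> > 2" and \<beta>: "0 < \<beta>" "\<beta> < 1"
    and \<Delta>: "\<Delta> = pmf_entropy (p is) - pmf_entropy (p i)" "0 < \<Delta>"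
  shows "(\<integral>\<omega>. real (plays ch \<omega> t i) \<partial>imab_space p) \<le> Gamma_bias \<alpha> \<beta> (X i) \<Delta> t + 2 * (\<alpha> - 1) / (\<alpha> - 2)"
proof -
  define \<Gamma> where "\<Gamma> = Gamma_bias \<alpha> \<beta> (X i) \<Delta> t"
  define u where "u = max 1 (nat \<lceil>\<Gamma>\<rceil>)"
  have "1 \<le> card (X i)"
    using X_i set_pmf_not_empty[of "p i"] by (auto simp: Suc_le_eq card_gt_0_iff)
  then have "0 \<le> (real (card (X i)) - 1) / (exp (\<beta> * \<Delta> / 2) - 1)"
    using \<beta> \<Delta> by (intro divide_nonneg_pos) auto
  then have "0 \<le> \<Gamma>" by (simp add: \<Gamma>_def Gamma_bias_def)
  then have u: "1 \<le> u" "\<Gamma> \<le> real u" "real u \<le> \<Gamma> + 1"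
    by (auto simp: u_def max_def) linarith+
  have "(\<integral>\<omega>. real (plays ch \<omega> t i) \<partial>imab_space p)
      \<le> real u + (\<Sum>(\<tau>, s)\<in>Sigma {1..t} (\<lambda>\<tau>. {1..<\<tau>}). delta_conf \<alpha> \<tau>)"
  proof (rule integral_le_of_covered_indicator_sum[OF prob_space_imab_space])
    fix \<omega>
    show "real (plays ch \<omega> t i) \<le> real u + (\<Sum>k\<in>Sigma {1..t} (\<lambda>\<tau>. {1..<\<tau>}). indicator
        ((\<lambda>(\<tau>, s). {\<omega>. ucb_value X \<alpha> \<tau> is (arm_samples \<omega> is s) < pmf_entropy (p is)} \<union>
          {\<omega>. u \<le> s \<and> pmf_entropy (p is) \<le> ucb_value X \<alpha> \<tau> i (arm_samples \<omega> i s)}) k) \<omega>)"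
      using plays_le_threshold_plus_misrankings[OF ch \<open>is < K\<close> u(1)] by (simp add: case_prod_unfold)
  next
    fix k assume "k \<in> Sigma {1..t} (\<lambda>\<tau>. {1..<\<tau>})"
    then show "\<exists>T\<in>sets (imab_space p).
        (\<lambda>(\<tau>, s). {\<omega>. ucb_value X \<alpha> \<tau> is (arm_samples \<omega> is s) < pmf_entropy (p is)} \<union>
          {\<omega>. u \<le> s \<and> pmf_entropy (p is) \<le> ucb_value X \<alpha> \<tau> i (arm_samples \<omega> i s)}) k \<subseteq> T \<and>
        measure (imab_space p) T \<le> (\<lambda>(\<tau>, s). delta_conf \<alpha> \<tau>) k"
      using misranking_event_cover[OF X_is X_i _ \<beta> \<Delta>, of \<alpha> _ t _ u] \<alpha> u(2)
      by (auto simp: \<Gamma>_def)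
  qed auto
  also have "\<dots> \<le> \<Gamma> + 1 + 1 / (\<alpha> - 2)"
    using u(3) sum_delta_conf_le[OF \<alpha>, of t] by linarith
  also have "\<dots> = \<Gamma> + (\<alpha> - 1) / (\<alpha> - 2)"
    using \<alpha> by (simp add: field_simps)
  also have "\<dots> \<le> \<Gamma> + 2 * (\<alpha> - 1) / (\<alpha> - 2)"
    using \<alpha> by (intro add_left_mono divide_right_mono) auto
  finally show ?thesis by (simp add: \<Gamma>_def)
qed

theorem theorem1:
  fixes K :: nat and X :: "nat \<Rightarrow> 'a set" and p :: "nat \<Rightarrow> 'a pmf"
    and \<alpha> \<beta> :: real and ch :: "nat \<Rightarrow> (nat \<times> 'a) list \<Rightarrow> nat" and t :: nat
  assumes "K \<ge> 2"
    and "\<And>i. i < K \<Longrightarrow> finite (X i)"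
    and "\<And>i. i < K \<Longrightarrow> set_pmf (p i) \<subseteq> X i"
    and "\<alpha> > 2"
    and "0 < \<beta>" and "\<beta> < 1"
    and "\<And>s h. ch s h \<in> ucb_argmax K X \<alpha> s h"
    and "t \<ge> 1"
  shows "pseudo_regret K p ch t \<le>
    (\<Sum>i\<in>{i. i < K \<and> gap K p i > 0}.
       Gamma_bias \<alpha> \<beta> (X i) (gap K p i) t * gap K p i + 2 * (\<alpha> - 1) / (\<alpha> - 2) * gap K p i)"
proof -
  have "max_entropy K p \<in> (\<lambda>i. pmf_entropy (p i)) ` {..<K}"
    unfolding max_entropy_def using \<open>K \<ge> 2\<close> by (intro Max_in) (auto simp: lessThan_empty_iff)
  then obtain "is" where "is < K" and opt: "pmf_entropy (p is) = max_entropy K p"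
    by auto
  show ?thesis
    unfolding pseudo_regret_def
  proof (rule sum_mono)
    fix i assume i: "i \<in> {i. i < K \<and> gap K p i > 0}"
    then have "(\<integral>\<omega>. real (plays ch \<omega> t i) \<partial>imab_space p)
        \<le> Gamma_bias \<alpha> \<beta> (X i) (gap K p i) t + 2 * (\<alpha> - 1) / (\<alpha> - 2)"
      using assms \<open>is < K\<close> by (intro expected_plays_le) (auto simp: gap_def opt)
    then show "(\<integral>\<omega>. real (plays ch \<omega> t i) \<partial>imab_space p) * gap K p i
        \<le> Gamma_bias \<alpha> \<beta> (X i) (gap K p i) t * gap K p i + 2 * (\<alpha> - 1) / (\<alpha> - 2) * gap K p i"
      using i mult_right_mono[of _ _ "gap K p i"] by (fastforce simp: distrib_right)
  qed
qed

end
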